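(* Let $\mathcal E$ be a nonlinear order preserving form on $L^2(\mu)$. The following are equivalent: (i) there exists a measurable $g\colon X\to(0,\infty)$ with $Gg<\infty$ $\mu$-a.e.; (ii) there exists a measurable $w\colon X\to(0,\infty)$ such that $\int_X|f|w\,d\mu\le\|f\|_L$ for all $f\in M(\mathcal E)$. If $\mathcal E_e$ exists, then the inequality in (ii) extends to all $f\in M(\mathcal E_e)$ with $\|\cdot\|_L$ replaced by $\|\cdot\|_{L_e}$.
   Context: $(X,\mathfrak A,\mu)$ is $\sigma$-finite. A nonlinear order preserving form is a lower semicontinuous convex $\mathcal E\colon L^2(\mu)\to[0,\infty]$ with $\mathcal E(-f)=\mathcal E(f)$, $\mathcal E(0)=0$ and $\mathcal E(f+|g|)+\mathcal E(f-|g|)\le\mathcal E(f+g)+\mathcal E(f-g)$ for all $f,g$. $M(\mathcal E)=\{f:\lim_{\lambda\to0+}\mathcal E(\lambda f)=0\}$, $\|f\|_L=\inf\{\lambda>0:\mathcal E(\lambda^{-1}f)\le1\}$. Resolvent: $G_\alpha f$ is the unique minimizer of $g\mapsto\mathcal E(g)+\frac\alpha2\|g-\alpha^{-1}f\|_2^2$; extended to nonnegative measurable $[0,\infty]$-valued functions by monotone limits; Green operator $Gf=\lim_{\alpha\to0+}G_\alpha f$. $\mathcal E_e$ (if it exists) is the lower semicontinuous relaxation on $L^0(\mu)$ w.r.t. local convergence in measure of $\mathcal E$ extended by $+\infty$, existing when $\mathcal E$ is lower semicontinuous on $D(\mathcal E)$ for this convergence; $M(\mathcal E_e)$ and $\|\cdot\|_{L_e}$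 are its modular space and Luxemburg seminorm, defined as for $\mathcal E$. *)

theory Defs
  imports "HOL-Analysis.Analysis"
begin

text \<open>Elements of L^2(mu) are represented by real functions; everything is
  invariant under a.e. equality (imposed on the form below).\<close>

definition L2 :: "'a measure \<Rightarrow> ('a \<Rightarrow> real) set" where
  "L2 M = {f. f \<in> borel_measurable M \<and> integrable M (\<lambda>x. (f x)\<^sup>2)}"

definition dist2sq :: "'a measure \<Rightarrow> ('a \<Rightarrow> real) \<Rightarrow> ('a \<Rightarrow> real) \<Rightarrow> real" where
  "dist2sq M f g = (\<integral>x. (f x - g x)\<^sup>2 \<partial>M)"

definition nonlinear_order_preserving_form ::
  "'a measure \<Rightarrow> (('a \<Rightarrow> real) \<Rightarrow> ennreal) \<Rightarrow> bool" where
  "nonlinear_order_preserving_form M E \<longleftrightarrow>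
     (\<forall>f\<in>L2 M. \<forall>g\<in>L2 M. (AE x in M. f x = g x) \<longrightarrow> E f = E g) \<and>
     (\<forall>f fs. f \<in> L2 M \<and> (\<forall>n. fs n \<in> L2 M) \<and> ((\<lambda>n. dist2sq M (fs n) f) \<longlonglongrightarrow> 0)
        \<longrightarrow> E f \<le> liminf (\<lambda>n. E (fs n))) \<and>
     (\<forall>f\<in>L2 M. \<forall>g\<in>L2 M. \<forall>t::real. 0 < t \<and> t < 1 \<longrightarrow>
        E (\<lambda>x. t * f x + (1 - t) * g x) \<le> ennreal t * E f + ennreal (1 - t) * E g) \<and>
     (\<forall>f\<in>L2 M. E (\<lambda>x. - f x) = E f) \<and>
     E (\<lambda>x. 0) = 0 \<and>
     (\<forall>f\<in>L2 M. \<forall>g\<in>L2 M.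
        E (\<lambda>x. f x + \<bar>g x\<bar>) + E (\<lambda>x. f x - \<bar>g x\<bar>) \<le> E (\<lambda>x. f x + g x) + E (\<lambda>x. f x - g x))"

definition is_resolvent ::
  "'a measure \<Rightarrow> (('a \<Rightarrow> real) \<Rightarrow> ennreal) \<Rightarrow> real \<Rightarrow> ('a \<Rightarrow> real) \<Rightarrow> ('a \<Rightarrow> real) \<Rightarrow> bool" where
  "is_resolvent M E \<alpha> f u \<longleftrightarrow> u \<in> L2 M \<and>
     (\<forall>g\<in>L2 M. E u + ennreal (\<alpha> / 2 * dist2sq M u (\<lambda>x. f x / \<alpha>))
                 \<le> E g + ennreal (\<alpha> / 2 * dist2sq M g (\<lambda>x. f x / \<alpha>)))"

definition resolvent ::
  "'a measure \<Rightarrow> (('a \<Rightarrow> real) \<Rightarrow> ennreal) \<Rightarrow> real \<Rightarrow> ('a \<Rightarrow> real) \<Rightarrow> ('a \<Rightarrow> real)" where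
  "resolvent M E \<alpha> f = (SOME u. is_resolvent M E \<alpha> f u)"

definition exhaustion :: "'a measure \<Rightarrow> nat \<Rightarrow> 'a set" where
  "exhaustion M = (SOME A. range A \<subseteq> sets M \<and> \<Union>(range A) = space M \<and>
      (\<forall>i. emeasure M (A i) \<noteq> \<infinity>) \<and> incseq A)"

definition approx :: "'a measure \<Rightarrow> ('a \<Rightarrow> ennreal) \<Rightarrow> nat \<Rightarrow> 'a \<Rightarrow> real" where
  "approx M g n = (\<lambda>x. indicator (exhaustion M n) x * enn2real (min (g x) (of_nat n)))"

definition resolvent_ext ::
  "'a measure \<Rightarrow> (('a \<Rightarrow> real) \<Rightarrow> ennreal) \<Rightarrow> real \<Rightarrow> ('a \<Rightarrow> ennreal) \<Rightarrow> 'a \<Rightarrow> ennreal" where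
  "resolvent_ext M E \<alpha> g = (\<lambda>x. SUP n. ennreal (resolvent M E \<alpha> (approx M g n) x))"

text \<open>Green operator: limit (monotone) as alpha \<rightarrow> 0+, along alpha = 1/(m+1)\<close>
definition green ::
  "'a measure \<Rightarrow> (('a \<Rightarrow> real) \<Rightarrow> ennreal) \<Rightarrow> ('a \<Rightarrow> ennreal) \<Rightarrow> 'a \<Rightarrow> ennreal" where
  "green M E g = (\<lambda>x. SUP m::nat. resolvent_ext M E (1 / real (Suc m)) g x)"

definition modular_space :: "(('a \<Rightarrow> real) \<Rightarrow> ennreal) \<Rightarrow> ('a \<Rightarrow> real) set \<Rightarrow> ('a \<Rightarrow> real) set" where
  "modular_space F D = {f \<in> D. ((\<lambda>l::real. F (\<lambda>x. l * f x)) \<longlongrightarrow> 0) (at_right 0)}"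

definition lux_norm :: "(('a \<Rightarrow> real) \<Rightarrow> ennreal) \<Rightarrow> ('a \<Rightarrow> real) \<Rightarrow> ennreal" where
  "lux_norm F f = Inf {ennreal l | l. l > 0 \<and> F (\<lambda>x. f x / l) \<le> 1}"

definition loc_conv_meas :: "'a measure \<Rightarrow> (nat \<Rightarrow> 'a \<Rightarrow> real) \<Rightarrow> ('a \<Rightarrow> real) \<Rightarrow> bool" where
  "loc_conv_meas M fs f \<longleftrightarrow> (\<forall>A\<in>sets M. emeasure M A < \<infinity> \<longrightarrow> (\<forall>\<epsilon>>0.
      ((\<lambda>n. emeasure M {x \<in> A. \<epsilon> < \<bar>fs n x - f x\<bar>}) \<longlonglongrightarrow> 0)))"

definition E_ext :: "'a measure \<Rightarrow> (('a \<Rightarrow> real) \<Rightarrow> ennreal) \<Rightarrow> ('a \<Rightarrow> real) \<Rightarrow> ennreal" where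
  "E_ext M E f = (if f \<in> L2 M then E f else \<infinity>)"

text \<open>Existence condition for E_e: E is lsc on D(E) w.r.t. local convergence in measure\<close>
definition Ee_exists :: "'a measure \<Rightarrow> (('a \<Rightarrow> real) \<Rightarrow> ennreal) \<Rightarrow> bool" where
  "Ee_exists M E \<longleftrightarrow> (\<forall>f fs. f \<in> L2 M \<and> E f < \<infinity> \<and> (\<forall>n. fs n \<in> L2 M \<and> E (fs n) < \<infinity>)
      \<and> loc_conv_meas M fs f \<longrightarrow> E f \<le> liminf (\<lambda>n. E (fs n)))"

text \<open>Lower semicontinuous relaxation on L^0 w.r.t. local convergence in measure
  (sequential lsc envelope; this topology is metrizable for sigma-finite mu)\<close>
definition E_e :: "'a measure \<Rightarrow> (('a \<Rightarrow> real) \<Rightarrow> ennreal) \<Rightarrow> ('a \<Rightarrow> real) \<Rightarrow> ennreal" where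
  "E_e M E f = (INF fs \<in> {fs. (\<forall>n. fs n \<in> borel_measurable M) \<and> loc_conv_meas M fs f}.
      liminf (\<lambda>n. E_ext M E (fs n)))"

end

(*
  Everything rests on the resolvent u = G_alpha f, the minimizer of
  E g + alpha/2 * ||g - f/alpha||^2. It exists because the objective is uniformly convex
  and lower semicontinuous, and the contraction property of E makes it monotone in f
  and antitone in alpha.

  (i) => (ii): truncate g to h <= g with h * Gg <= k for an integrable k > 0. Pairing the
  variational inequality  <h - alpha u, phi - u> <= E phi - E u  for u = G_alpha h with any
  phi >= 0 of energy at most 1 and letting alpha -> 0 gives  int h phi <= 1 + int k,
  so w = h / (1 + int k) satisfies  int |f| w <= ||f||_L.

  (ii) => (i): for 0 <= h <= w/2 and u = G_alpha h,
  E u <= <u, h> <= (int |u| w)/2 <= ||u||_L / 2 <= max 1 (E u) / 2, which forces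
  int u w <= 1; by monotone convergence int G(w/2) w <= 1, hence G(w/2) < oo a.e.

  The bound passes to E_e by Fatou's lemma along an a.e. convergent subsequence of a
  sequence converging locally in measure.
*)
theory Submission
  imports Defs
begin

section \<open>Square-integrable functions\<close>

lemma L2_I: "f \<in> borel_measurable M \<Longrightarrow> integrable M (\<lambda>x. (f x)\<^sup>2) \<Longrightarrow> f \<in> L2 M"
  by (simp add: L2_def)

lemma L2_measurable: "f \<in> L2 M \<Longrightarrow> f \<in> borel_measurable M"
  by (simp add: L2_def)

lemma L2_integrable_sq: "f \<in> L2 M \<Longrightarrow> integrable M (\<lambda>x. (f x)\<^sup>2)"
  by (simp add: L2_def)

lemma L2_I_bound:
  assumes "f \<in> borel_measurable M" "integrable M g" "AE x in M. (f x)\<^sup>2 \<le> g x"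
  shows "f \<in> L2 M"
proof (rule L2_I)
  show "integrable M (\<lambda>x. (f x)\<^sup>2)"
    using assms by (intro Bochner_Integration.integrable_bound[OF assms(2)]) (auto elim: eventually_mono)
qed (fact assms)

lemma L2_integrable_mult:
  assumes "f \<in> L2 M" "g \<in> L2 M"
  shows "integrable M (\<lambda>x. f x * g x)"
proof (rule Bochner_Integration.integrable_bound)
  show "integrable M (\<lambda>x. (f x)\<^sup>2 + (g x)\<^sup>2)"
    using assms by (auto simp: L2_def)
  have "\<bar>a * b\<bar> \<le> a\<^sup>2 + b\<^sup>2" for a b :: real
  proof -
    have "0 \<le> (\<bar>a\<bar> - \<bar>b\<bar>)\<^sup>2"
      by simp
    then have "2 * \<bar>a * b\<bar> \<le> a\<^sup>2 + b\<^sup>2"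
      by (simp add: power2_eq_square algebra_simps abs_mult)
    then show ?thesis
      using abs_ge_zero[of "a * b"] by linarith
  qed
  then show "AE x in M. norm (f x * g x) \<le> norm ((f x)\<^sup>2 + (g x)\<^sup>2)"
    by auto
qed (use assms in \<open>auto simp: L2_def\<close>)

lemma L2_lin:
  assumes "f \<in> L2 M" "g \<in> L2 M"
  shows "(\<lambda>x. a * f x + b * g x) \<in> L2 M"
proof (rule L2_I)
  have "integrable M (\<lambda>x. a\<^sup>2 * (f x)\<^sup>2 + 2 * a * b * (f x * g x) + b\<^sup>2 * (g x)\<^sup>2)"
    using assms L2_integrable_mult[OF assms] by (auto simp: L2_def)
  then show "integrable M (\<lambda>x. (a * f x + b * g x)\<^sup>2)"
    by (simp add: power2_eq_square algebra_simps)
qed (use assms in \<open>auto simp: L2_def\<close>)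

lemma L2_zero: "(\<lambda>x. 0) \<in> L2 M"
  by (simp add: L2_def)

lemma L2_scale: "f \<in> L2 M \<Longrightarrow> (\<lambda>x. a * f x) \<in> L2 M"
  using L2_lin[of f M f a 0] by simp

lemma L2_div: "f \<in> L2 M \<Longrightarrow> (\<lambda>x. f x / a) \<in> L2 M"
  using L2_scale[of f M "1 / a"] by simp

lemma L2_add: "f \<in> L2 M \<Longrightarrow> g \<in> L2 M \<Longrightarrow> (\<lambda>x. f x + g x) \<in> L2 M"
  using L2_lin[of f M g 1 1] by simp

lemma L2_diff: "f \<in> L2 M \<Longrightarrow> g \<in> L2 M \<Longrightarrow> (\<lambda>x. f x - g x) \<in> L2 M"
  using L2_lin[of f M g 1 "-1"] by simp

lemma L2_abs: "f \<in> L2 M \<Longrightarrow> (\<lambda>x. \<bar>f x\<bar>) \<in> L2 M"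
  by (auto simp: L2_def)

lemma L2_max:
  assumes "f \<in> L2 M" "g \<in> L2 M"
  shows "(\<lambda>x. max (f x) (g x)) \<in> L2 M"
  by (rule L2_I_bound[where g = "\<lambda>x. (f x)\<^sup>2 + (g x)\<^sup>2"])
     (use assms in \<open>auto simp: L2_def max_def\<close>)

lemma L2_min:
  assumes "f \<in> L2 M" "g \<in> L2 M"
  shows "(\<lambda>x. min (f x) (g x)) \<in> L2 M"
  by (rule L2_I_bound[where g = "\<lambda>x. (f x)\<^sup>2 + (g x)\<^sup>2"])
     (use assms in \<open>auto simp: L2_def min_def\<close>)

lemma dist2sq_nonneg: "0 \<le> dist2sq M f g"
  by (simp add: dist2sq_def)

lemma integrable_sq_diff: "f \<in> L2 M \<Longrightarrow> g \<in> L2 M \<Longrightarrow> integrable M (\<lambda>x. (f x - g x)\<^sup>2)"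
  using L2_diff L2_integrable_sq by blast

lemma nn_integral_sq_diff:
  assumes "f \<in> L2 M" "g \<in> L2 M" "0 \<le> c"
  shows "(\<integral>\<^sup>+x. ennreal (c * (f x - g x)\<^sup>2) \<partial>M) = ennreal (c * dist2sq M f g)"
  using assms by (subst nn_integral_eq_integral)
    (auto simp: dist2sq_def intro!: integrable_mult_right integrable_sq_diff)

lemma AE_eq_if_dist2sq_nonpos:
  assumes "f \<in> L2 M" "g \<in> L2 M" "dist2sq M f g \<le> 0"
  shows "AE x in M. f x = g x"
proof -
  have "dist2sq M f g = 0"
    using assms(3) dist2sq_nonneg[of M f g] by (rule antisym)
  then have "(\<integral>x. (f x - g x)\<^sup>2 \<partial>M) = 0"
    by (simp add: dist2sq_def)
  then have "AE x in M. (f x - g x)\<^sup>2 = 0"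
    using integrable_sq_diff[OF assms(1,2)] by (subst (asm) integral_nonneg_eq_0_iff_AE) auto
  then show ?thesis
    by eventually_elim simp
qed

lemma nn_integral_le_liminf_AE_tendsto:
  assumes [measurable]: "\<And>n. f n \<in> borel_measurable M"
    and lim: "AE x in M. (\<lambda>n. f n x) \<longlonglongrightarrow> g x"
  shows "(\<integral>\<^sup>+x. ennreal (g x) \<partial>M) \<le> liminf (\<lambda>n. \<integral>\<^sup>+x. ennreal (f n x) \<partial>M)"
proof -
  have "(\<integral>\<^sup>+x. ennreal (g x) \<partial>M) = (\<integral>\<^sup>+x. liminf (\<lambda>n. ennreal (f n x)) \<partial>M)"
    using lim by (intro nn_integral_cong_AE) (auto elim!: eventually_mono
      intro!: lim_imp_Liminf[symmetric] tendsto_ennrealI)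
  also have "\<dots> \<le> liminf (\<lambda>n. \<integral>\<^sup>+x. ennreal (f n x) \<partial>M)"
    by (intro nn_integral_liminf) measurable
  finally show ?thesis .
qed

lemma abs_le_half_power_add_sq: "\<bar>d\<bar> \<le> (1/2)^n + 2^n * d\<^sup>2" for d :: real
proof (cases "\<bar>d\<bar> \<le> (1/2)^n")
  case False
  then have "1 \<le> 2^n * \<bar>d\<bar>"
    by (simp add: power_one_over field_simps)
  then have "\<bar>d\<bar> \<le> 2^n * \<bar>d\<bar> * \<bar>d\<bar>"
    using mult_right_mono[of 1 "2^n * \<bar>d\<bar>" "\<bar>d\<bar>"] by simp
  then have "\<bar>d\<bar> \<le> 2^n * d\<^sup>2"
    by (simp add: power2_eq_square abs_mult_self_eq mult.assoc)
  then show ?thesis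
    using zero_le_power[of "1/2::real" n] by linarith
next
  case True
  moreover have "0 \<le> 2^n * d\<^sup>2"
    by simp
  ultimately show ?thesis
    by linarith
qed

lemma convergent_if_summable_diff:
  fixes f :: "nat \<Rightarrow> 'a::real_normed_vector"
  assumes "summable (\<lambda>n. f (Suc n) - f n)"
  shows "convergent f"
proof -
  have "(\<lambda>n. (\<Sum>i<n. f (Suc i) - f i) + f 0) \<longlonglongrightarrow> (\<Sum>i. f (Suc i) - f i) + f 0"
    using assms by (intro tendsto_add summable_LIMSEQ tendsto_const)
  then have "f \<longlonglongrightarrow> (\<Sum>i. f (Suc i) - f i) + f 0"
    by (simp only: sum_lessThan_telescope diff_add_cancel)
  then show ?thesis
    by (rule convergentI)
qed

text \<open>With \<open>s\<^sub>n = 2\<^sup>n (v\<^sub>n - v\<^sub>n\<^sub>+\<^sub>1)\<^sup>2\<close> we have \<open>\<integral> s\<^sub>n \<le> C 8\<^sup>-\<^sup>n\<close>, so \<open>\<Sum> s\<^sub>n < \<infinity>\<close> a.e.; there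
  the increments are summable because \<open>\<bar>v\<^sub>n\<^sub>+\<^sub>1 - v\<^sub>n\<bar> \<le> 2\<^sup>-\<^sup>n + s\<^sub>n\<close>.\<close>

lemma AE_convergent_if_fast_L2_cauchy:
  assumes v: "\<And>n. v n \<in> L2 M"
    and step: "\<And>n. dist2sq M (v n) (v (Suc n)) \<le> C * (1/16)^n"
  shows "AE x in M. convergent (\<lambda>n. v n x)"
proof -
  have [measurable]: "v n \<in> borel_measurable M" for n
    using v by (rule L2_measurable)
  define s where "s n x = 2^n * (v n x - v (Suc n) x)\<^sup>2" for n x
  have "0 \<le> C"
    using step[of 0] dist2sq_nonneg[of M "v 0" "v 1"] by simp
  have "(\<integral>\<^sup>+x. ennreal (s n x) \<partial>M) = ennreal (2^n * dist2sq M (v n) (v (Suc n)))" for n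
    unfolding s_def by (rule nn_integral_sq_diff[OF v v]) simp
  also have "\<dots> n \<le> ennreal (C * (1/8)^n)" for n
  proof -
    have "(16::real)^n = 2^n * 8^n"
      by (simp flip: power_mult_distrib)
    then show ?thesis
      using step[of n] by (intro ennreal_leI) (simp add: power_divide field_simps)
  qed
  finally have "(\<integral>\<^sup>+x. (\<Sum>n. ennreal (s n x)) \<partial>M) \<le> (\<Sum>n. ennreal (C * (1/8)^n))"
    by (subst nn_integral_suminf) (auto simp: s_def intro!: suminf_le)
  also have "\<dots> = ennreal (\<Sum>n. C * (1/8)^n)"
    using \<open>0 \<le> C\<close> by (intro suminf_ennreal2) (auto intro!: summable_mult summable_geometric)
  also have "\<dots> < \<infinity>"
    by simp
  finally have "AE x in M. (\<Sum>n. ennreal (s n x)) \<noteq> \<infinity>"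
    by (intro nn_integral_PInf_AE) (auto simp: s_def)
  then show ?thesis
  proof eventually_elim
    case (elim x)
    have bound: "\<bar>v (Suc n) x - v n x\<bar> \<le> (1/2)^n + s n x" for n
      unfolding s_def by (subst power2_commute) (rule abs_le_half_power_add_sq)
    have "summable (\<lambda>n. s n x)"
      using elim by (intro summable_suminf_not_top) (auto simp: s_def top_unique)
    then have "summable (\<lambda>n. (1/2::real)^n + s n x)"
      by (intro summable_add summable_geometric) simp_all
    then have "summable (\<lambda>n. v (Suc n) x - v n x)"
      by (rule summable_comparison_test') (use bound in simp)
    then show ?case
      by (rule convergent_if_summable_diff)
  qed
qed

lemma nn_integral_sq_diff_le_if_AE_tendsto:
  assumes v: "\<And>n. v n \<in> L2 M" and lim: "AE x in M. (\<lambda>j. v j x) \<longlonglongrightarrow> V x"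
    and bound: "\<And>j. n \<le> j \<Longrightarrow> dist2sq M (v n) (v j) \<le> b"
  shows "(\<integral>\<^sup>+x. ennreal ((v n x - V x)\<^sup>2) \<partial>M) \<le> ennreal b"
proof -
  have [measurable]: "v j \<in> borel_measurable M" for j
    using v by (rule L2_measurable)
  have "AE x in M. (\<lambda>j. (v n x - v j x)\<^sup>2) \<longlonglongrightarrow> (v n x - V x)\<^sup>2"
    using lim by eventually_elim (intro tendsto_power tendsto_diff tendsto_const)
  then have "(\<integral>\<^sup>+x. ennreal ((v n x - V x)\<^sup>2) \<partial>M)
      \<le> liminf (\<lambda>j. \<integral>\<^sup>+x. ennreal ((v n x - v j x)\<^sup>2) \<partial>M)"
    by (rule nn_integral_le_liminf_AE_tendsto[rotated]) measurable
  also have "\<dots> \<le> ennreal b"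
  proof (intro Liminf_le eventually_sequentiallyI)
    fix j assume "n \<le> j"
    then show "(\<integral>\<^sup>+x. ennreal ((v n x - v j x)\<^sup>2) \<partial>M) \<le> ennreal b"
      using nn_integral_sq_diff[OF v v, of 1] bound by (simp add: ennreal_leI)
  qed simp
  finally show ?thesis .
qed

lemma L2_fast_cauchy_limit:
  assumes v: "\<And>n. v n \<in> L2 M"
    and cauchy: "\<And>i j. i \<le> j \<Longrightarrow> dist2sq M (v i) (v j) \<le> C * (1/16)^i"
  obtains V where "V \<in> L2 M" "AE x in M. (\<lambda>n. v n x) \<longlonglongrightarrow> V x"
    "(\<lambda>n. dist2sq M (v n) V) \<longlonglongrightarrow> 0"
proof
  have [measurable]: "v n \<in> borel_measurable M" for n
    using v by (rule L2_measurable)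
  define V where "V x = lim (\<lambda>n. v n x)" for x
  have [measurable]: "V \<in> borel_measurable M"
    unfolding V_def by measurable
  show V_lim: "AE x in M. (\<lambda>n. v n x) \<longlonglongrightarrow> V x"
    using AE_convergent_if_fast_L2_cauchy[OF v cauchy[OF le_SucI[OF order_refl]]]
    by eventually_elim (simp add: V_def convergent_LIMSEQ_iff)
  have bound: "(\<integral>\<^sup>+x. ennreal ((v n x - V x)\<^sup>2) \<partial>M) \<le> ennreal (C * (1/16)^n)" for n
    using V_lim cauchy by (rule nn_integral_sq_diff_le_if_AE_tendsto[OF v])
  have "integrable M (\<lambda>x. (v 0 x - V x)\<^sup>2)"
    using bound[of 0] by (intro integrableI_nonneg) (simp_all add: le_less_trans)
  then have "(\<lambda>x. v 0 x - (v 0 x - V x)) \<in> L2 M"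
    by (intro L2_diff[OF v] L2_I) simp_all
  then show "V \<in> L2 M"
    by simp
  have "0 \<le> C"
    using cauchy[of 0 0] dist2sq_nonneg[of M "v 0" "v 0"] by simp
  have dist_le: "dist2sq M (v n) V \<le> C * (1/16)^n" for n
  proof -
    have "ennreal (dist2sq M (v n) V) \<le> ennreal (C * (1/16)^n)"
      using bound[of n] nn_integral_sq_diff[OF v \<open>V \<in> L2 M\<close>, of 1] by simp
    then show ?thesis
      using \<open>0 \<le> C\<close> by (subst (asm) ennreal_le_iff) simp_all
  qed
  show "(\<lambda>n. dist2sq M (v n) V) \<longlonglongrightarrow> 0"
  proof (rule tendsto_sandwich[of "\<lambda>_. 0" _ _ "\<lambda>n. C * (1/16)^n"])
    show "\<forall>\<^sub>F n in sequentially. 0 \<le> dist2sq M (v n) V"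
      by (simp add: dist2sq_nonneg)
    show "\<forall>\<^sub>F n in sequentially. dist2sq M (v n) V \<le> C * (1/16)^n"
      using dist_le by simp
    show "(\<lambda>n. C * (1/16::real)^n) \<longlonglongrightarrow> 0"
      by (intro tendsto_mult_right_zero LIMSEQ_power_zero) simp
  qed simp
qed

lemma dist2sq_midpoint:
  assumes "a \<in> L2 M" "b \<in> L2 M" "k \<in> L2 M"
  shows "dist2sq M (\<lambda>x. (a x + b x) / 2) k
       = dist2sq M a k / 2 + dist2sq M b k / 2 - dist2sq M a b / 4"
proof -
  have "dist2sq M (\<lambda>x. (a x + b x) / 2) k
      = (\<integral>x. (a x - k x)\<^sup>2 / 2 + (b x - k x)\<^sup>2 / 2 - (a x - b x)\<^sup>2 / 4 \<partial>M)"
    unfolding dist2sq_def by (rule Bochner_Integration.integral_cong) (simp_all add: power2_eq_square field_simps)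
  also have "\<dots> = dist2sq M a k / 2 + dist2sq M b k / 2 - dist2sq M a b / 4"
    using assms by (simp add: dist2sq_def integrable_sq_diff)
  finally show ?thesis .
qed

lemma dist2sq_segment:
  assumes "u \<in> L2 M" "\<phi> \<in> L2 M" "k \<in> L2 M"
  shows "dist2sq M (\<lambda>x. t * \<phi> x + (1 - t) * u x) k
       = dist2sq M u k + 2 * t * (\<integral>x. (u x - k x) * (\<phi> x - u x) \<partial>M) + t\<^sup>2 * dist2sq M \<phi> u"
proof -
  have "dist2sq M (\<lambda>x. t * \<phi> x + (1 - t) * u x) k
      = (\<integral>x. (u x - k x)\<^sup>2 + 2 * t * ((u x - k x) * (\<phi> x - u x)) + t\<^sup>2 * (\<phi> x - u x)\<^sup>2 \<partial>M)"
    unfolding dist2sq_def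
    by (rule Bochner_Integration.integral_cong) (simp_all add: power2_eq_square algebra_simps)
  also have "\<dots> = dist2sq M u k + 2 * t * (\<integral>x. (u x - k x) * (\<phi> x - u x) \<partial>M) + t\<^sup>2 * dist2sq M \<phi> u"
    using assms by (simp add: dist2sq_def integrable_sq_diff L2_integrable_mult L2_diff)
  finally show ?thesis .
qed

lemma weighted_dist2sq_sum_mono_AE:
  assumes "a \<in> L2 M" "b \<in> L2 M" "u1 \<in> L2 M" "u2 \<in> L2 M" "k1 \<in> L2 M" "k2 \<in> L2 M"
    and "AE x in M. c1 * (a x - k1 x)\<^sup>2 + c2 * (b x - k2 x)\<^sup>2 \<le> c1 * (u1 x - k1 x)\<^sup>2 + c2 * (u2 x - k2 x)\<^sup>2"
  shows "c1 * dist2sq M a k1 + c2 * dist2sq M b k2 \<le> c1 * dist2sq M u1 k1 + c2 * dist2sq M u2 k2"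
proof -
  have int: "integrable M (\<lambda>x. c * (f x - k x)\<^sup>2)" if "f \<in> L2 M" "k \<in> L2 M" for c f k
    using that by (intro integrable_mult_right integrable_sq_diff)
  have split: "(\<integral>x. c * (f x - k x)\<^sup>2 + c' * (g x - k' x)\<^sup>2 \<partial>M) = c * dist2sq M f k + c' * dist2sq M g k'"
    if "f \<in> L2 M" "k \<in> L2 M" "g \<in> L2 M" "k' \<in> L2 M" for c c' f g k k'
    using that by (simp add: Bochner_Integration.integral_add[OF int int] dist2sq_def)
  have "(\<integral>x. c1 * (a x - k1 x)\<^sup>2 + c2 * (b x - k2 x)\<^sup>2 \<partial>M)
      \<le> (\<integral>x. c1 * (u1 x - k1 x)\<^sup>2 + c2 * (u2 x - k2 x)\<^sup>2 \<partial>M)"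
    using assms by (intro integral_mono_AE Bochner_Integration.integrable_add int)
  then show ?thesis
    using assms by (simp add: split)
qed

section \<open>Order preserving forms\<close>

lemma ennreal_add_self_le_add_selfD: "(a::ennreal) + a \<le> b + b \<Longrightarrow> a \<le> b"
  by (cases a rule: ennreal_cases; cases b rule: ennreal_cases)
     (auto simp: ennreal_plus[symmetric] top_unique simp del: ennreal_plus)

locale order_preserving_form =
  fixes M :: "'a measure" and E :: "('a \<Rightarrow> real) \<Rightarrow> ennreal"
  assumes order_preserving_form: "nonlinear_order_preserving_form M E"
begin

lemma E_lsc:
  "f \<in> L2 M \<Longrightarrow> (\<And>n. fs n \<in> L2 M) \<Longrightarrow> (\<lambda>n. dist2sq M (fs n) f) \<longlonglongrightarrow> 0
    \<Longrightarrow> E f \<le> liminf (\<lambda>n. E (fs n))"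
  using order_preserving_form unfolding nonlinear_order_preserving_form_def by blast

lemma E_convex:
  "f \<in> L2 M \<Longrightarrow> g \<in> L2 M \<Longrightarrow> 0 < t \<Longrightarrow> t < 1 \<Longrightarrow>
    E (\<lambda>x. t * f x + (1 - t) * g x) \<le> ennreal t * E f + ennreal (1 - t) * E g"
  using order_preserving_form unfolding nonlinear_order_preserving_form_def by blast

lemma E_uminus: "f \<in> L2 M \<Longrightarrow> E (\<lambda>x. - f x) = E f"
  using order_preserving_form unfolding nonlinear_order_preserving_form_def by blast

lemma E_zero: "E (\<lambda>x. 0) = 0"
  using order_preserving_form unfolding nonlinear_order_preserving_form_def by blast

lemma E_abs_contraction:
  "f \<in> L2 M \<Longrightarrow> g \<in> L2 M \<Longrightarrow>
    E (\<lambda>x. f x + \<bar>g x\<bar>) + E (\<lambda>x. f x - \<bar>g x\<bar>) \<le> E (\<lambda>x. f x + g x) + E (\<lambda>x. f x - g x)"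
  using order_preserving_form unfolding nonlinear_order_preserving_form_def by blast

lemma E_abs_le:
  assumes "f \<in> L2 M"
  shows "E (\<lambda>x. \<bar>f x\<bar>) \<le> E f"
proof -
  have "E (\<lambda>x. \<bar>f x\<bar>) + E (\<lambda>x. - \<bar>f x\<bar>) \<le> E f + E (\<lambda>x. - f x)"
    using E_abs_contraction[OF L2_zero assms] by simp
  then have "E (\<lambda>x. \<bar>f x\<bar>) + E (\<lambda>x. \<bar>f x\<bar>) \<le> E f + E f"
    by (simp add: E_uminus assms L2_abs)
  then show ?thesis
    by (rule ennreal_add_self_le_add_selfD)
qed

lemma E_max_min_le:
  assumes "f \<in> L2 M" "g \<in> L2 M"
  shows "E (\<lambda>x. max (f x) (g x)) + E (\<lambda>x. min (f x) (g x)) \<le> E f + E g"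
proof -
  let ?a = "\<lambda>x. (f x + g x) / 2" and ?b = "\<lambda>x. (f x - g x) / 2"
  have "E (\<lambda>x. ?a x + \<bar>?b x\<bar>) + E (\<lambda>x. ?a x - \<bar>?b x\<bar>) \<le> E (\<lambda>x. ?a x + ?b x) + E (\<lambda>x. ?a x - ?b x)"
    using assms by (intro E_abs_contraction L2_div L2_add L2_diff)
  moreover have "(\<lambda>x. ?a x + \<bar>?b x\<bar>) = (\<lambda>x. max (f x) (g x))"
    "(\<lambda>x. ?a x - \<bar>?b x\<bar>) = (\<lambda>x. min (f x) (g x))"
    "(\<lambda>x. ?a x + ?b x) = f" "(\<lambda>x. ?a x - ?b x) = g"
    by (auto simp: fun_eq_iff max_def min_def field_simps)
  ultimately show ?thesis
    by simp
qed

lemma E_scale_le: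
  assumes "f \<in> L2 M" "0 \<le> t" "t \<le> 1"
  shows "E (\<lambda>x. t * f x) \<le> ennreal t * E f"
proof -
  consider "t = 0" | "t = 1" | "0 < t" "t < 1"
    using assms by linarith
  then show ?thesis
  proof cases
    case 3
    then have "E (\<lambda>x. t * f x + (1 - t) * 0) \<le> ennreal t * E f + ennreal (1 - t) * E (\<lambda>x. 0)"
      using assms by (intro E_convex L2_zero)
    then show ?thesis
      by (simp add: E_zero)
  qed (simp_all add: E_zero)
qed

lemma E_convex_finite:
  assumes "f \<in> L2 M" "g \<in> L2 M" "E f < \<infinity>" "E g < \<infinity>" "0 < t" "t < 1"
  shows "E (\<lambda>x. t * f x + (1 - t) * g x) < \<infinity>"
    "enn2real (E (\<lambda>x. t * f x + (1 - t) * g x)) \<le> t * enn2real (E f) + (1 - t) * enn2real (E g)"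
proof -
  obtain a b where ab: "E f = ennreal a" "E g = ennreal b" "0 \<le> a" "0 \<le> b"
    using assms(3,4) by (cases "E f" rule: ennreal_cases; cases "E g" rule: ennreal_cases) auto
  have "E (\<lambda>x. t * f x + (1 - t) * g x) \<le> ennreal t * E f + ennreal (1 - t) * E g"
    using assms by (intro E_convex)
  also have "\<dots> = ennreal (t * a + (1 - t) * b)"
    using assms ab by (simp add: ennreal_mult ennreal_plus)
  finally have le: "E (\<lambda>x. t * f x + (1 - t) * g x) \<le> ennreal (t * a + (1 - t) * b)" .
  then show "E (\<lambda>x. t * f x + (1 - t) * g x) < \<infinity>"
    by (simp add: le_less_trans)
  show "enn2real (E (\<lambda>x. t * f x + (1 - t) * g x)) \<le> t * enn2real (E f) + (1 - t) * enn2real (E g)"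
    using le assms ab by (simp add: enn2real_leI)
qed

lemma lux_norm_le:
  assumes "f \<in> L2 M" "E f \<le> ennreal c" "1 \<le> c"
  shows "lux_norm E f \<le> ennreal c"
  unfolding lux_norm_def
proof (rule Inf_lower, intro CollectI exI conjI)
  have "E (\<lambda>x. (1 / c) * f x) \<le> ennreal (1 / c) * E f"
    using assms by (intro E_scale_le) auto
  also have "\<dots> \<le> ennreal (1 / c) * ennreal c"
    using assms by (intro mult_left_mono) auto
  also have "\<dots> = 1"
    using assms by (simp add: ennreal_mult[symmetric])
  finally show "E (\<lambda>x. f x / c) \<le> 1"
    by simp
qed (use assms in auto)

lemma modular_space_if_E_finite:
  assumes "u \<in> L2 M" "E u < \<infinity>"
  shows "u \<in> modular_space E (L2 M)"
  unfolding modular_space_def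
proof (intro CollectI conjI)
  show "((\<lambda>l. E (\<lambda>x. l * u x)) \<longlongrightarrow> 0) (at_right 0)"
  proof (rule tendsto_sandwich[of "\<lambda>_. 0" _ _ "\<lambda>l. ennreal (l * enn2real (E u))"])
    show "\<forall>\<^sub>F l in at_right (0::real). E (\<lambda>x. l * u x) \<le> ennreal (l * enn2real (E u))"
      unfolding eventually_at_right_field
    proof (intro exI[of _ 1] conjI allI impI)
      fix l :: real assume "0 < l" "l < 1"
      then have "E (\<lambda>x. l * u x) \<le> ennreal l * E u"
        using assms by (intro E_scale_le) auto
      also have "\<dots> = ennreal (l * enn2real (E u))"
        using assms \<open>0 < l\<close> by (simp add: ennreal_mult)
      finally show "E (\<lambda>x. l * u x) \<le> ennreal (l * enn2real (E u))" .
    qed simp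
    have "((\<lambda>l. l * enn2real (E u)) \<longlongrightarrow> 0 * enn2real (E u)) (at_right 0)"
      by (intro tendsto_intros)
    then show "((\<lambda>l. ennreal (l * enn2real (E u))) \<longlongrightarrow> 0) (at_right 0)"
      using tendsto_ennrealI by fastforce
  qed simp_all
qed (fact assms)

end

section \<open>The proximal problem and the resolvent\<close>

lemma ennreal_liminf_add_le: "liminf f + liminf g \<le> liminf (\<lambda>n. f n + (g n :: ennreal))"
proof -
  have inc: "incseq (\<lambda>n. INF m\<in>{n..}. h m)" for h :: "nat \<Rightarrow> ennreal"
    by (auto simp: incseq_def intro!: INF_superset_mono)
  have "liminf f + liminf g = (SUP n. (INF m\<in>{n..}. f m) + (INF m\<in>{n..}. g m))"
    unfolding liminf_SUP_INF by (rule ennreal_SUP_add[symmetric]) (rule inc)+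
  also have "\<dots> \<le> (SUP n. INF m\<in>{n..}. f m + g m)"
    by (intro SUP_mono) (auto intro!: INF_greatest add_mono INF_lower)
  finally show ?thesis
    unfolding liminf_SUP_INF .
qed

context order_preserving_form
begin

definition prox_obj :: "real \<Rightarrow> ('a \<Rightarrow> real) \<Rightarrow> ('a \<Rightarrow> real) \<Rightarrow> ennreal" where
  "prox_obj c k v = E v + ennreal (c * dist2sq M v k)"

lemma is_resolvent_iff_prox_obj:
  "is_resolvent M E \<alpha> f u \<longleftrightarrow>
    u \<in> L2 M \<and> (\<forall>g\<in>L2 M. prox_obj (\<alpha>/2) (\<lambda>x. f x / \<alpha>) u \<le> prox_obj (\<alpha>/2) (\<lambda>x. f x / \<alpha>) g)"
  by (simp add: is_resolvent_def prox_obj_def)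

lemma prox_obj_real:
  "E v < \<infinity> \<Longrightarrow> 0 \<le> c \<Longrightarrow> prox_obj c k v = ennreal (enn2real (E v) + c * dist2sq M v k)"
  by (simp add: prox_obj_def ennreal_plus dist2sq_nonneg)

lemma E_le_prox_obj: "E v \<le> prox_obj c k v"
  by (simp add: prox_obj_def)

lemma prox_obj_zero: "prox_obj c k (\<lambda>x. 0) = ennreal (c * dist2sq M (\<lambda>x. 0) k)"
  by (simp add: prox_obj_def E_zero)

lemma prox_obj_zero_finite: "prox_obj c k (\<lambda>x. 0) < \<infinity>"
  by (simp add: prox_obj_zero)

lemma prox_obj_midpoint:
  assumes "a \<in> L2 M" "b \<in> L2 M" "k \<in> L2 M" "E a < \<infinity>" "E b < \<infinity>"
  defines "m \<equiv> \<lambda>x. (a x + b x) / 2"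
  shows "m \<in> L2 M" "E m < \<infinity>"
    "enn2real (E m) + c * dist2sq M m k \<le>
      (enn2real (E a) + c * dist2sq M a k) / 2 + (enn2real (E b) + c * dist2sq M b k) / 2
      - c * dist2sq M a b / 4"
proof -
  have m_eq: "m = (\<lambda>x. 1/2 * a x + (1 - 1/2) * b x)"
    by (auto simp: m_def fun_eq_iff field_simps)
  show "m \<in> L2 M"
    unfolding m_eq using assms by (intro L2_lin)
  show "E m < \<infinity>"
    unfolding m_eq using assms by (intro E_convex_finite) auto
  have "enn2real (E m) \<le> enn2real (E a) / 2 + enn2real (E b) / 2"
    unfolding m_eq using E_convex_finite(2)[OF assms(1,2,4,5), of "1/2"] by simp
  moreover have dist_mid: "dist2sq M m k = dist2sq M a k / 2 + dist2sq M b k / 2 - dist2sq M a b / 4"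
    unfolding m_def using assms(1-3) by (rule dist2sq_midpoint)
  have "c * dist2sq M m k = c * dist2sq M a k / 2 + c * dist2sq M b k / 2 - c * dist2sq M a b / 4"
    unfolding dist_mid by (simp add: algebra_simps)
  ultimately show "enn2real (E m) + c * dist2sq M m k \<le>
      (enn2real (E a) + c * dist2sq M a k) / 2 + (enn2real (E b) + c * dist2sq M b k) / 2
      - c * dist2sq M a b / 4"
    unfolding add_divide_distrib by linarith
qed

text \<open>By the parallelogram identity the midpoint of \<open>a\<close> and \<open>b\<close> improves on their average by
  \<open>c/4 \<cdot> dist2sq M a b\<close>, and it cannot beat the lower bound \<open>m\<close>.\<close>

lemma prox_obj_almost_minimizers_close:
  assumes k: "k \<in> L2 M" and c: "0 < c" and \<epsilon>: "0 \<le> \<epsilon>"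
    and lower: "\<And>g. g \<in> L2 M \<Longrightarrow> m \<le> prox_obj c k g"
    and a: "a \<in> L2 M" "prox_obj c k a \<le> m + ennreal \<epsilon>"
    and b: "b \<in> L2 M" "prox_obj c k b \<le> m + ennreal \<epsilon>"
  shows "c / 4 * dist2sq M a b \<le> \<epsilon>"
proof -
  have "m < \<infinity>"
    using lower[OF L2_zero] prox_obj_zero_finite by (rule le_less_trans)
  then obtain r where m: "m = ennreal r" "0 \<le> r"
    by (cases m rule: ennreal_cases) auto
  define P where "P v = enn2real (E v) + c * dist2sq M v k" for v
  have P_nonneg: "0 \<le> P v" for v
    using c by (simp add: P_def dist2sq_nonneg)
  have prox_P: "prox_obj c k v = ennreal (P v)" if "E v < \<infinity>" for v
    unfolding P_def using that c by (intro prox_obj_real) auto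
  have almost: "E v < \<infinity> \<and> P v \<le> r + \<epsilon>" if "prox_obj c k v \<le> m + ennreal \<epsilon>" for v
  proof
    have "prox_obj c k v \<le> ennreal (r + \<epsilon>)"
      using that m \<epsilon> by (simp add: ennreal_plus)
    then show "E v < \<infinity>"
      using E_le_prox_obj[of v c k] by (simp add: le_less_trans)
    then show "P v \<le> r + \<epsilon>"
      using \<open>prox_obj c k v \<le> ennreal (r + \<epsilon>)\<close> m \<epsilon>
      by (simp add: prox_P ennreal_le_iff del: ennreal_plus)
  qed
  obtain mid where mid: "mid \<in> L2 M" "E mid < \<infinity>" "P mid \<le> P a / 2 + P b / 2 - c * dist2sq M a b / 4"
    using prox_obj_midpoint[OF a(1) b(1) k] almost[OF a(2)] almost[OF b(2)]
    unfolding P_def by blast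
  have "r \<le> P mid"
    using lower[OF mid(1)] m P_nonneg by (simp add: prox_P[OF mid(2)])
  then show ?thesis
    using mid(3) almost[OF a(2)] almost[OF b(2)] by linarith
qed

lemma prox_obj_lsc:
  assumes k: "k \<in> L2 M" and c: "0 \<le> c" and v: "\<And>n. v n \<in> L2 M" and V: "V \<in> L2 M"
    and lim: "AE x in M. (\<lambda>n. v n x) \<longlonglongrightarrow> V x" "(\<lambda>n. dist2sq M (v n) V) \<longlonglongrightarrow> 0"
  shows "prox_obj c k V \<le> liminf (\<lambda>n. prox_obj c k (v n))"
proof -
  have [measurable]: "k \<in> borel_measurable M" "v n \<in> borel_measurable M" for n
    using k v by (auto intro: L2_measurable)
  have "AE x in M. (\<lambda>n. c * (v n x - k x)\<^sup>2) \<longlonglongrightarrow> c * (V x - k x)\<^sup>2"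
    using lim(1) by eventually_elim (intro tendsto_mult tendsto_power tendsto_diff tendsto_const)
  then have "(\<integral>\<^sup>+x. ennreal (c * (V x - k x)\<^sup>2) \<partial>M)
      \<le> liminf (\<lambda>n. \<integral>\<^sup>+x. ennreal (c * (v n x - k x)\<^sup>2) \<partial>M)"
    by (rule nn_integral_le_liminf_AE_tendsto[rotated]) measurable
  then have "ennreal (c * dist2sq M V k) \<le> liminf (\<lambda>n. ennreal (c * dist2sq M (v n) k))"
    using c by (simp add: nn_integral_sq_diff[OF V k] nn_integral_sq_diff[OF v k])
  then have "prox_obj c k V \<le> liminf (\<lambda>n. E (v n)) + liminf (\<lambda>n. ennreal (c * dist2sq M (v n) k))"
    unfolding prox_obj_def using E_lsc[OF V v lim(2)] by (rule add_mono[rotated])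
  also have "\<dots> \<le> liminf (\<lambda>n. prox_obj c k (v n))"
    unfolding prox_obj_def by (rule ennreal_liminf_add_le)
  finally show ?thesis .
qed

text \<open>A minimizing sequence with errors \<open>16\<^sup>-\<^sup>n\<close> is a fast Cauchy sequence by
  \<open>prox_obj_almost_minimizers_close\<close>, and its limit is a minimizer by lower semicontinuity.\<close>

lemma prox_obj_has_minimizer:
  assumes k: "k \<in> L2 M" and c: "0 < c"
  obtains u where "u \<in> L2 M" "\<And>g. g \<in> L2 M \<Longrightarrow> prox_obj c k u \<le> prox_obj c k g"
proof -
  define m where "m = (INF v\<in>L2 M. prox_obj c k v)"
  have lower: "m \<le> prox_obj c k g" if "g \<in> L2 M" for g
    unfolding m_def using that by (rule INF_lower)
  have "m < \<infinity>"
    using lower[OF L2_zero] prox_obj_zero_finite by (rule le_less_trans)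
  define e :: "nat \<Rightarrow> real" where "e n = (1/16)^n" for n
  have "\<exists>v \<in> L2 M. prox_obj c k v < m + ennreal (e n)" for n
  proof -
    have "m < m + ennreal (e n)"
      using \<open>m < \<infinity>\<close> by (cases m rule: ennreal_cases)
        (auto simp: e_def ennreal_plus[symmetric] ennreal_less_iff simp del: ennreal_plus)
    then show ?thesis
      unfolding m_def INF_less_iff by blast
  qed
  then obtain v where v: "\<And>n. v n \<in> L2 M" and v_min: "\<And>n. prox_obj c k (v n) \<le> m + ennreal (e n)"
    by (metis less_imp_le)
  have "dist2sq M (v i) (v j) \<le> 4 / c * (1/16)^i" if "i \<le> j" for i j
  proof -
    have "e j \<le> e i"
      unfolding e_def using that by (intro power_decreasing) auto
    then have "prox_obj c k (v j) \<le> m + ennreal (e i)"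
      using v_min[of j] by (meson add_left_mono ennreal_leI order_trans)
    then have "c / 4 * dist2sq M (v i) (v j) \<le> e i"
      using v_min[of i] by (intro prox_obj_almost_minimizers_close[OF k c _ lower v _ v])
        (auto simp: e_def)
    then show ?thesis
      using c by (simp add: e_def field_simps)
  qed
  then obtain V where V: "V \<in> L2 M" "AE x in M. (\<lambda>n. v n x) \<longlonglongrightarrow> V x"
    "(\<lambda>n. dist2sq M (v n) V) \<longlonglongrightarrow> 0"
    by (rule L2_fast_cauchy_limit[OF v])
  have "prox_obj c k V \<le> liminf (\<lambda>n. prox_obj c k (v n))"
    using c by (intro prox_obj_lsc[OF k _ v V(1-3)]) simp
  also have "\<dots> \<le> liminf (\<lambda>n. m + ennreal (e n))"
    using v_min by (intro Liminf_mono) simp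
  also have "\<dots> = m"
  proof -
    have "(\<lambda>n. m + ennreal (e n)) \<longlonglongrightarrow> m + ennreal 0"
      unfolding e_def by (intro tendsto_add tendsto_const tendsto_ennrealI LIMSEQ_power_zero) simp
    then show ?thesis
      by (simp add: lim_imp_Liminf)
  qed
  finally show ?thesis
    using V(1) lower by (meson order_trans that)
qed

lemma prox_obj_minimizer_AE_eq:
  assumes k: "k \<in> L2 M" and c: "0 < c"
    and u: "u \<in> L2 M" "\<And>g. g \<in> L2 M \<Longrightarrow> prox_obj c k u \<le> prox_obj c k g"
    and w: "w \<in> L2 M" "prox_obj c k w \<le> prox_obj c k u"
  shows "AE x in M. u x = w x"
proof (rule AE_eq_if_dist2sq_nonpos[OF u(1) w(1)])
  have "c / 4 * dist2sq M u w \<le> 0"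
    using w by (intro prox_obj_almost_minimizers_close[OF k c _ u(2) u(1) _ w(1)]) auto
  then show "dist2sq M u w \<le> 0"
    using c by (simp add: mult_le_0_iff)
qed

lemma E_minimizer_finite:
  assumes "\<And>g. g \<in> L2 M \<Longrightarrow> prox_obj c k u \<le> prox_obj c k g"
  shows "E u < \<infinity>"
  using E_le_prox_obj assms[OF L2_zero] prox_obj_zero_finite by (rule order_trans[THEN le_less_trans])

text \<open>Exchanging \<open>u\<^sub>1, u\<^sub>2\<close> for \<open>min, max\<close> increases neither the energies (by \<open>E_max_min_le\<close>) nor,
  by hypothesis, the distance terms; as \<open>u\<^sub>2\<close> is optimal for the second problem, \<open>min u\<^sub>1 u\<^sub>2\<close> is
  then optimal for the first one, so it coincides with \<open>u\<^sub>1\<close>.\<close>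

lemma prox_obj_minimizers_ordered:
  assumes k1: "k1 \<in> L2 M" and c1: "0 < c1"
    and u1: "u1 \<in> L2 M" "\<And>g. g \<in> L2 M \<Longrightarrow> prox_obj c1 k1 u1 \<le> prox_obj c1 k1 g"
    and k2: "k2 \<in> L2 M" and c2: "0 < c2"
    and u2: "u2 \<in> L2 M" "\<And>g. g \<in> L2 M \<Longrightarrow> prox_obj c2 k2 u2 \<le> prox_obj c2 k2 g"
    and swap: "AE x in M. c1 * (min (u1 x) (u2 x) - k1 x)\<^sup>2 + c2 * (max (u1 x) (u2 x) - k2 x)\<^sup>2
               \<le> c1 * (u1 x - k1 x)\<^sup>2 + c2 * (u2 x - k2 x)\<^sup>2"
  shows "AE x in M. u1 x \<le> u2 x"
proof -
  define a where "a x = min (u1 x) (u2 x)" for x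
  define b where "b x = max (u1 x) (u2 x)" for x
  have a: "a \<in> L2 M" and b: "b \<in> L2 M"
    unfolding a_def b_def using u1 u2 by (auto intro: L2_min L2_max)
  have E_u1: "E u1 < \<infinity>" and E_u2: "E u2 < \<infinity>"
    using E_minimizer_finite u1(2) u2(2) by blast+
  have E_swap: "E b + E a \<le> E u1 + E u2"
    unfolding a_def b_def using u1(1) u2(1) by (rule E_max_min_le)
  also have "E u1 + E u2 < \<infinity>"
    using E_u1 E_u2 by simp
  finally have "E b + E a < \<infinity>" .
  then have E_a: "E a < \<infinity>" and E_b: "E b < \<infinity>"
    by simp_all
  have "enn2real (E b) + enn2real (E a) \<le> enn2real (E u1) + enn2real (E u2)"
    using enn2real_mono[OF E_swap] E_a E_b E_u1 E_u2 by (simp add: enn2real_plus less_top)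
  moreover have "c1 * dist2sq M a k1 + c2 * dist2sq M b k2 \<le> c1 * dist2sq M u1 k1 + c2 * dist2sq M u2 k2"
    using a b u1(1) u2(1) k1 k2 swap unfolding a_def b_def by (rule weighted_dist2sq_sum_mono_AE)
  moreover have "enn2real (E u2) + c2 * dist2sq M u2 k2 \<le> enn2real (E b) + c2 * dist2sq M b k2"
  proof -
    have "ennreal (enn2real (E u2) + c2 * dist2sq M u2 k2) \<le> ennreal (enn2real (E b) + c2 * dist2sq M b k2)"
      using u2(2)[OF b] c2 by (simp only: prox_obj_real[OF E_u2] prox_obj_real[OF E_b] less_imp_le)
    then show ?thesis
      using c2 by (simp add: ennreal_le_iff dist2sq_nonneg del: ennreal_plus)
  qed
  ultimately have "enn2real (E a) + c1 * dist2sq M a k1 \<le> enn2real (E u1) + c1 * dist2sq M u1 k1"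
    by linarith
  then have "prox_obj c1 k1 a \<le> prox_obj c1 k1 u1"
    using c1 by (simp only: prox_obj_real[OF E_a] prox_obj_real[OF E_u1] less_imp_le ennreal_leI)
  then have "AE x in M. u1 x = a x"
    using prox_obj_minimizer_AE_eq[OF k1 c1 u1(1) u1(2) a] by blast
  then show ?thesis
    by eventually_elim (simp add: a_def)
qed

end

lemma min_max_sq_diff_le:
  fixes x y k1 k2 c :: real
  assumes "k1 \<le> k2" "0 \<le> c"
  shows "c * (min x y - k1)\<^sup>2 + c * (max x y - k2)\<^sup>2 \<le> c * (x - k1)\<^sup>2 + c * (y - k2)\<^sup>2"
proof (cases "x \<le> y")
  case False
  have "c * (x - k1)\<^sup>2 + c * (y - k2)\<^sup>2 - (c * (y - k1)\<^sup>2 + c * (x - k2)\<^sup>2) = 2 * c * ((x - y) * (k2 - k1))"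
    by (simp add: power2_eq_square algebra_simps)
  also have "\<dots> \<ge> 0"
    using False assms by simp
  finally show ?thesis
    using False by (simp add: min_def max_def)
qed (simp add: min_def max_def)

lemma min_max_sq_diff_div_le:
  fixes x y a b f :: real
  assumes "0 < b" "b \<le> a" "0 \<le> y"
  shows "a/2 * (min x y - f/a)\<^sup>2 + b/2 * (max x y - f/b)\<^sup>2 \<le> a/2 * (x - f/a)\<^sup>2 + b/2 * (y - f/b)\<^sup>2"
proof (cases "x \<le> y")
  case False
  have "a/2 * (x - f/a)\<^sup>2 + b/2 * (y - f/b)\<^sup>2 - (a/2 * (y - f/a)\<^sup>2 + b/2 * (x - f/b)\<^sup>2) = (a - b)/2 * (x\<^sup>2 - y\<^sup>2)"
    using assms by (simp add: power2_eq_square field_simps)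
  also have "\<dots> \<ge> 0"
    using False assms by (simp add: power_mono)
  finally show ?thesis
    using False by (simp add: min_def max_def)
qed (simp add: min_def max_def)

lemma abs_sq_diff_le: "0 \<le> k \<Longrightarrow> (\<bar>x\<bar> - k)\<^sup>2 \<le> (x - k)\<^sup>2" for x k :: real
  by (cases "0 \<le> x") (auto simp: power2_eq_square algebra_simps intro!: mult_nonneg_nonpos)

lemma nonneg_if_nonneg_add_small_mult:
  fixes X Y :: real
  assumes "\<And>t. 0 < t \<Longrightarrow> t < 1 \<Longrightarrow> 0 \<le> X + t * Y" "0 \<le> Y"
  shows "0 \<le> X"
proof (rule ccontr)
  assume "\<not> 0 \<le> X"
  define t where "t = min (1/2) (- X / (Y + 1))"
  have "0 < t" "t < 1"
    using \<open>\<not> 0 \<le> X\<close> assms(2) by (auto simp: t_def divide_neg_pos)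
  have "t * Y \<le> - X / (Y + 1) * Y"
    using assms(2) by (intro mult_right_mono) (auto simp: t_def)
  also have "\<dots> < - X"
    using \<open>\<not> 0 \<le> X\<close> assms(2) by (simp add: field_simps)
  finally show False
    using assms(1)[OF \<open>0 < t\<close> \<open>t < 1\<close>] by simp
qed

context order_preserving_form
begin

lemma is_resolvent_resolvent:
  assumes "0 < \<alpha>" "f \<in> L2 M"
  shows "is_resolvent M E \<alpha> f (resolvent M E \<alpha> f)"
proof -
  have "0 < \<alpha>/2"
    using assms by simp
  obtain u where "u \<in> L2 M" "\<And>g. g \<in> L2 M \<Longrightarrow> prox_obj (\<alpha>/2) (\<lambda>x. f x / \<alpha>) u \<le> prox_obj (\<alpha>/2) (\<lambda>x. f x / \<alpha>) g"
    by (rule prox_obj_has_minimizer[OF L2_div[OF assms(2), of \<alpha>] \<open>0 < \<alpha>/2\<close>]) blast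
  then have "is_resolvent M E \<alpha> f u"
    by (simp add: is_resolvent_iff_prox_obj)
  then show ?thesis
    unfolding resolvent_def by (rule someI[where P = "is_resolvent M E \<alpha> f"])
qed

lemma resolvent_L2: "0 < \<alpha> \<Longrightarrow> f \<in> L2 M \<Longrightarrow> resolvent M E \<alpha> f \<in> L2 M"
  using is_resolvent_resolvent by (simp add: is_resolvent_iff_prox_obj)

lemma resolvent_minimizes:
  "0 < \<alpha> \<Longrightarrow> f \<in> L2 M \<Longrightarrow> g \<in> L2 M \<Longrightarrow>
    prox_obj (\<alpha>/2) (\<lambda>x. f x / \<alpha>) (resolvent M E \<alpha> f) \<le> prox_obj (\<alpha>/2) (\<lambda>x. f x / \<alpha>) g"
  using is_resolvent_resolvent by (simp add: is_resolvent_iff_prox_obj)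

lemma E_resolvent_finite: "0 < \<alpha> \<Longrightarrow> f \<in> L2 M \<Longrightarrow> E (resolvent M E \<alpha> f) < \<infinity>"
  by (rule E_minimizer_finite) (rule resolvent_minimizes)

lemma resolvent_nonneg:
  assumes \<alpha>: "0 < \<alpha>" and f: "f \<in> L2 M" "\<And>x. 0 \<le> f x"
  shows "AE x in M. 0 \<le> resolvent M E \<alpha> f x"
proof -
  let ?u = "resolvent M E \<alpha> f" and ?k = "\<lambda>x. f x / \<alpha>"
  have u: "?u \<in> L2 M"
    using \<alpha> f(1) by (rule resolvent_L2)
  have "dist2sq M (\<lambda>x. \<bar>?u x\<bar>) ?k \<le> dist2sq M ?u ?k"
    unfolding dist2sq_def using u f \<alpha>
    by (intro integral_mono integrable_sq_diff L2_abs L2_div abs_sq_diff_le) auto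
  then have "prox_obj (\<alpha>/2) ?k (\<lambda>x. \<bar>?u x\<bar>) \<le> prox_obj (\<alpha>/2) ?k ?u"
    unfolding prox_obj_def using \<alpha> by (intro add_mono E_abs_le u ennreal_leI mult_left_mono) auto
  with prox_obj_minimizer_AE_eq[OF L2_div[OF f(1)] _ u resolvent_minimizes[OF \<alpha> f(1)] L2_abs[OF u]] \<alpha>
  show ?thesis
    by (auto elim!: eventually_mono)
qed

lemma resolvent_mono:
  assumes \<alpha>: "0 < \<alpha>" and fg: "f \<in> L2 M" "g \<in> L2 M" "\<And>x. f x \<le> g x"
  shows "AE x in M. resolvent M E \<alpha> f x \<le> resolvent M E \<alpha> g x"
  using \<alpha> fg
  by (intro prox_obj_minimizers_ordered[OF L2_div[OF fg(1)] _ resolvent_L2 resolvent_minimizes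
        L2_div[OF fg(2)] _ resolvent_L2 resolvent_minimizes] AE_I2 min_max_sq_diff_le divide_right_mono)
    auto

lemma resolvent_antimono_param:
  assumes \<beta>: "0 < \<beta>" "\<beta> \<le> \<alpha>" and f: "f \<in> L2 M" "\<And>x. 0 \<le> f x"
  shows "AE x in M. resolvent M E \<alpha> f x \<le> resolvent M E \<beta> f x"
proof -
  have \<alpha>: "0 < \<alpha>"
    using \<beta> by simp
  have "AE x in M.
      \<alpha>/2 * (min (resolvent M E \<alpha> f x) (resolvent M E \<beta> f x) - f x / \<alpha>)\<^sup>2
      + \<beta>/2 * (max (resolvent M E \<alpha> f x) (resolvent M E \<beta> f x) - f x / \<beta>)\<^sup>2
      \<le> \<alpha>/2 * (resolvent M E \<alpha> f x - f x / \<alpha>)\<^sup>2 + \<beta>/2 * (resolvent M E \<beta> f x - f x / \<beta>)\<^sup>2"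
    using resolvent_nonneg[OF \<beta>(1) f] by eventually_elim (rule min_max_sq_diff_div_le[OF \<beta>])
  then show ?thesis
    using \<alpha> \<beta> by (intro prox_obj_minimizers_ordered[OF L2_div[OF f(1)] _ resolvent_L2[OF \<alpha> f(1)]
          resolvent_minimizes[OF \<alpha> f(1)] L2_div[OF f(1)] _ resolvent_L2[OF \<beta>(1) f(1)]
          resolvent_minimizes[OF \<beta>(1) f(1)]]) simp_all
qed

lemma resolvent_energy_bound:
  assumes \<alpha>: "0 < \<alpha>" and f: "f \<in> L2 M"
  defines "u \<equiv> resolvent M E \<alpha> f"
  shows "enn2real (E u) + \<alpha>/2 * (\<integral>x. (u x)\<^sup>2 \<partial>M) \<le> (\<integral>x. u x * f x \<partial>M)"
proof -
  have u: "u \<in> L2 M" and E_u: "E u < \<infinity>"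
    unfolding u_def using resolvent_L2[OF \<alpha> f] E_resolvent_finite[OF \<alpha> f] by simp_all
  have "prox_obj (\<alpha>/2) (\<lambda>x. f x / \<alpha>) u \<le> prox_obj (\<alpha>/2) (\<lambda>x. f x / \<alpha>) (\<lambda>x. 0)"
    unfolding u_def using \<alpha> f L2_zero by (rule resolvent_minimizes)
  then have "ennreal (enn2real (E u) + \<alpha>/2 * dist2sq M u (\<lambda>x. f x / \<alpha>))
      \<le> ennreal (\<alpha>/2 * dist2sq M (\<lambda>x. 0) (\<lambda>x. f x / \<alpha>))"
    by (simp only: prox_obj_real[OF E_u less_imp_le[OF half_gt_zero[OF \<alpha>]]] prox_obj_zero)
  then have "enn2real (E u) + \<alpha>/2 * dist2sq M u (\<lambda>x. f x / \<alpha>) \<le> \<alpha>/2 * dist2sq M (\<lambda>x. 0) (\<lambda>x. f x / \<alpha>)"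
    using \<alpha> by (subst (asm) ennreal_le_iff) (auto simp: dist2sq_nonneg)
  then have le: "enn2real (E u) + \<alpha>/2 * dist2sq M u (\<lambda>x. f x / \<alpha>) \<le> \<alpha>/2 * (\<integral>x. (f x / \<alpha>)\<^sup>2 \<partial>M)"
    by (simp add: dist2sq_def)
  have "\<alpha>/2 * dist2sq M u (\<lambda>x. f x / \<alpha>)
      = (\<integral>x. \<alpha>/2 * (u x)\<^sup>2 - u x * f x + \<alpha>/2 * (f x / \<alpha>)\<^sup>2 \<partial>M)"
    unfolding dist2sq_def using \<alpha> by (simp add: power2_eq_square field_simps)
  also have "\<dots> = \<alpha>/2 * (\<integral>x. (u x)\<^sup>2 \<partial>M) - (\<integral>x. u x * f x \<partial>M) + \<alpha>/2 * (\<integral>x. (f x / \<alpha>)\<^sup>2 \<partial>M)"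
    using u f by (simp add: L2_integrable_sq L2_integrable_mult L2_div)
  finally show ?thesis
    using le by linarith
qed

lemma resolvent_L2_bound:
  assumes \<alpha>: "0 < \<alpha>" and f: "f \<in> L2 M"
  defines "u \<equiv> resolvent M E \<alpha> f"
  shows "(\<integral>x. (\<alpha> * u x)\<^sup>2 \<partial>M) \<le> 4 * (\<integral>x. (f x)\<^sup>2 \<partial>M)"
proof -
  have u: "u \<in> L2 M"
    unfolding u_def using \<alpha> f by (rule resolvent_L2)
  have "u x * f x \<le> \<alpha>/4 * (u x)\<^sup>2 + (f x)\<^sup>2 / \<alpha>" for x
  proof -
    have "0 \<le> (\<alpha> * u x - 2 * f x)\<^sup>2 / (4 * \<alpha>)"
      using \<alpha> by simp
    also have "\<dots> = \<alpha>/4 * (u x)\<^sup>2 + (f x)\<^sup>2 / \<alpha> - u x * f x"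
      using \<alpha> by (simp add: power2_eq_square field_simps)
    finally show ?thesis
      by simp
  qed
  then have "(\<integral>x. u x * f x \<partial>M) \<le> (\<integral>x. \<alpha>/4 * (u x)\<^sup>2 + (f x)\<^sup>2 / \<alpha> \<partial>M)"
    using u f by (intro integral_mono L2_integrable_mult Bochner_Integration.integrable_add
        integrable_mult_right integrable_divide L2_integrable_sq)
  also have "\<dots> = \<alpha>/4 * (\<integral>x. (u x)\<^sup>2 \<partial>M) + (\<integral>x. (f x)\<^sup>2 \<partial>M) / \<alpha>"
    using u f by (simp add: L2_integrable_sq)
  finally have "\<alpha>/4 * (\<integral>x. (u x)\<^sup>2 \<partial>M) \<le> (\<integral>x. (f x)\<^sup>2 \<partial>M) / \<alpha>"
    using resolvent_energy_bound[OF \<alpha> f] enn2real_nonneg[of "E u"] unfolding u_def by linarith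
  then have "\<alpha>\<^sup>2 * (\<integral>x. (u x)\<^sup>2 \<partial>M) \<le> 4 * (\<integral>x. (f x)\<^sup>2 \<partial>M)"
    using \<alpha> by (simp add: power2_eq_square field_simps)
  then show ?thesis
    by (simp add: power_mult_distrib)
qed

text \<open>Comparing \<open>u\<close> with \<open>u + t (\<phi> - u)\<close>, using convexity of \<open>E\<close>, and letting \<open>t \<rightarrow> 0\<close>.\<close>

lemma resolvent_variational_ineq:
  assumes \<alpha>: "0 < \<alpha>" and f: "f \<in> L2 M" and \<phi>: "\<phi> \<in> L2 M" "E \<phi> < \<infinity>"
  defines "u \<equiv> resolvent M E \<alpha> f"
  shows "(\<integral>x. (f x - \<alpha> * u x) * (\<phi> x - u x) \<partial>M) \<le> enn2real (E \<phi>) - enn2real (E u)"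
proof -
  define k where "k x = f x / \<alpha>" for x
  have u: "u \<in> L2 M" and E_u: "E u < \<infinity>" and k: "k \<in> L2 M"
    unfolding u_def k_def using resolvent_L2[OF \<alpha> f] E_resolvent_finite[OF \<alpha> f] L2_div[OF f]
    by simp_all
  define I where "I = (\<integral>x. (u x - k x) * (\<phi> x - u x) \<partial>M)"
  have "0 \<le> (enn2real (E \<phi>) - enn2real (E u) + \<alpha> * I) + t * (\<alpha>/2 * dist2sq M \<phi> u)"
    if t: "0 < t" "t < 1" for t
  proof -
    define v where "v x = t * \<phi> x + (1 - t) * u x" for x
    have v: "v \<in> L2 M"
      unfolding v_def using \<phi> u by (intro L2_lin)
    have E_v: "E v < \<infinity>" "enn2real (E v) \<le> t * enn2real (E \<phi>) + (1 - t) * enn2real (E u)"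
      unfolding v_def[abs_def] using E_convex_finite[OF \<phi>(1) u \<phi>(2) E_u t] by auto
    have "prox_obj (\<alpha>/2) k u \<le> prox_obj (\<alpha>/2) k v"
      unfolding u_def k_def[abs_def] using \<alpha> f v by (rule resolvent_minimizes)
    then have "ennreal (enn2real (E u) + \<alpha>/2 * dist2sq M u k) \<le> ennreal (enn2real (E v) + \<alpha>/2 * dist2sq M v k)"
      using \<alpha> by (simp only: prox_obj_real[OF E_u] prox_obj_real[OF E_v(1)] less_imp_le half_gt_zero)
    then have "enn2real (E u) + \<alpha>/2 * dist2sq M u k \<le> enn2real (E v) + \<alpha>/2 * dist2sq M v k"
      using \<alpha> by (subst (asm) ennreal_le_iff) (auto simp: dist2sq_nonneg)
    then have "0 \<le> t * ((enn2real (E \<phi>) - enn2real (E u) + \<alpha> * I) + t * (\<alpha>/2 * dist2sq M \<phi> u))"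
      using E_v(2) unfolding v_def dist2sq_segment[OF u \<phi>(1) k] I_def
      by (simp add: power2_eq_square algebra_simps)
    then show ?thesis
      using t by (simp add: zero_le_mult_iff)
  qed
  moreover have "0 \<le> \<alpha>/2 * dist2sq M \<phi> u"
    using \<alpha> by (intro mult_nonneg_nonneg) (simp_all add: dist2sq_nonneg)
  ultimately have "0 \<le> enn2real (E \<phi>) - enn2real (E u) + \<alpha> * I"
    by (rule nonneg_if_nonneg_add_small_mult)
  moreover have "(\<integral>x. (f x - \<alpha> * u x) * (\<phi> x - u x) \<partial>M) = (\<integral>x. - \<alpha> * ((u x - k x) * (\<phi> x - u x)) \<partial>M)"
    using \<alpha> by (intro Bochner_Integration.integral_cong) (auto simp: k_def field_simps)
  ultimately show ?thesis
    by (simp add: I_def)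
qed

end

section \<open>Truncations and the Green operator\<close>

context sigma_finite_measure
begin

lemma exhaustion:
  shows exhaustion_sets: "exhaustion M i \<in> sets M"
    and exhaustion_UN: "(\<Union>i. exhaustion M i) = space M"
    and exhaustion_finite: "emeasure M (exhaustion M i) < \<infinity>"
    and incseq_exhaustion: "incseq (exhaustion M)"
proof -
  obtain A :: "nat \<Rightarrow> 'a set" where A: "range A \<subseteq> sets M" "(\<Union>i. A i) = space M"
    "\<And>i. emeasure M (A i) \<noteq> \<infinity>" "incseq A"
    using sigma_finite_incseq by metis
  have "range (exhaustion M) \<subseteq> sets M \<and> (\<Union>i. exhaustion M i) = space M \<and>
      (\<forall>i. emeasure M (exhaustion M i) \<noteq> \<infinity>) \<and> incseq (exhaustion M)"
    unfolding exhaustion_def by (rule someI[of _ A]) (use A in auto)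
  then show "exhaustion M i \<in> sets M" "(\<Union>i. exhaustion M i) = space M"
    "emeasure M (exhaustion M i) < \<infinity>" "incseq (exhaustion M)"
    by (auto simp: less_top)
qed

lemma approx_measurable [measurable]:
  "g \<in> borel_measurable M \<Longrightarrow> approx M g n \<in> borel_measurable M"
  using exhaustion_sets[of n] unfolding approx_def by measurable

lemma approx_nonneg: "0 \<le> approx M g n x"
  by (simp add: approx_def)

lemma approx_le_index: "approx M g n x \<le> real n"
proof -
  have "enn2real (min (g x) (of_nat n)) \<le> real n"
    by (rule enn2real_leI) (auto simp: min.coboundedI2 ennreal_of_nat_eq_real_of_nat)
  then show ?thesis
    by (auto simp: approx_def indicator_def)
qed

lemma approx_L2:
  assumes [measurable]: "g \<in> borel_measurable M"
  shows "approx M g n \<in> L2 M"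
proof (rule L2_I_bound)
  have [measurable]: "exhaustion M n \<in> sets M"
    by (rule exhaustion_sets)
  show "integrable M (\<lambda>x. (real n)\<^sup>2 * indicator (exhaustion M n) x)"
    using exhaustion_finite[of n] by (intro integrable_mult_right integrable_real_indicator) auto
  have "(approx M g n x)\<^sup>2 \<le> (real n)\<^sup>2 * indicator (exhaustion M n) x" for x
  proof (cases "x \<in> exhaustion M n")
    case True
    have "(approx M g n x)\<^sup>2 \<le> (real n)\<^sup>2"
      by (rule power_mono[OF approx_le_index approx_nonneg])
    then show ?thesis
      using True by simp
  qed (simp add: approx_def)
  then show "AE x in M. (approx M g n x)\<^sup>2 \<le> (real n)\<^sup>2 * indicator (exhaustion M n) x"
    by simp
qed measurable

lemma approx_mono:
  assumes "\<And>x. x \<in> space M \<Longrightarrow> g x \<le> g' x"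
  shows "approx M g n x \<le> approx M g' n x"
proof (cases "x \<in> exhaustion M n")
  case True
  then have "x \<in> space M"
    using exhaustion_UN by blast
  then have "enn2real (min (g x) (of_nat n)) \<le> enn2real (min (g' x) (of_nat n))"
    using assms by (intro enn2real_mono min.mono) (auto simp: min_less_iff_disj ennreal_of_nat_eq_real_of_nat)
  then show ?thesis
    using True by (simp add: approx_def)
qed (simp add: approx_def)

lemma approx_mono_index: "approx M g n x \<le> approx M g (Suc n) x"
proof -
  have "exhaustion M n \<subseteq> exhaustion M (Suc n)"
    using incseq_exhaustion by (simp add: incseq_Suc_iff)
  moreover have "enn2real (min (g x) (of_nat n)) \<le> enn2real (min (g x) (of_nat (Suc n)))"
    by (intro enn2real_mono min.mono) (auto simp: min_less_iff_disj ennreal_of_nat_eq_real_of_nat)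
  ultimately show ?thesis
    by (auto simp: approx_def indicator_def)
qed

lemma approx_le:
  assumes "0 \<le> h x"
  shows "approx M (\<lambda>x. ennreal (h x)) n x \<le> h x"
proof -
  have "enn2real (min (ennreal (h x)) (of_nat n)) \<le> h x"
    using assms by (intro enn2real_leI) auto
  then show ?thesis
    using assms by (auto simp: approx_def indicator_def)
qed

lemma approx_tendsto:
  assumes x: "x \<in> space M" and h: "0 \<le> h x"
  shows "(\<lambda>n. approx M (\<lambda>x. ennreal (h x)) n x) \<longlonglongrightarrow> h x"
proof (rule tendsto_eventually)
  obtain i where i: "x \<in> exhaustion M i"
    using exhaustion_UN x by blast
  obtain j :: nat where j: "h x \<le> real j"
    using real_arch_simple by blast
  show "\<forall>\<^sub>F n in sequentially. approx M (\<lambda>x. ennreal (h x)) n x = h x"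
  proof (rule eventually_sequentiallyI[of "max i j"])
    fix n assume n: "max i j \<le> n"
    then have "x \<in> exhaustion M n"
      using incseq_exhaustion i by (auto simp: incseq_def)
    moreover have "ennreal (h x) \<le> of_nat n"
      using j n by (metis ennreal_leI ennreal_of_nat_eq_real_of_nat max.bounded_iff of_nat_mono order_trans)
    ultimately show "approx M (\<lambda>x. ennreal (h x)) n x = h x"
      using h by (simp add: approx_def min_absorb1)
  qed
qed

end

locale sigma_finite_order_preserving_form = order_preserving_form + sigma_finite_measure M
begin

lemma resolvent_approx_L2: "g \<in> borel_measurable M \<Longrightarrow> resolvent M E (1 / real (Suc m)) (approx M g n) \<in> L2 M"
  by (simp add: resolvent_L2 approx_L2)

lemma resolvent_approx_measurable [measurable]:
  "g \<in> borel_measurable M \<Longrightarrow> resolvent M E (1 / real (Suc m)) (approx M g n) \<in> borel_measurable M"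
  by (rule L2_measurable[OF resolvent_approx_L2])

lemma green_eq_SUP:
  "green M E g x = (SUP m. SUP n. ennreal (resolvent M E (1 / real (Suc m)) (approx M g n) x))"
  by (simp add: green_def resolvent_ext_def)

lemma green_measurable [measurable]: "g \<in> borel_measurable M \<Longrightarrow> green M E g \<in> borel_measurable M"
  unfolding green_eq_SUP by measurable

lemma resolvent_approx_le_green:
  "ennreal (resolvent M E (1 / real (Suc m)) (approx M g n) x) \<le> green M E g x"
  unfolding green_eq_SUP by (meson SUP_upper2 UNIV_I order_refl)

lemma green_mono:
  assumes [measurable]: "g \<in> borel_measurable M" "g' \<in> borel_measurable M"
    and le: "\<And>x. x \<in> space M \<Longrightarrow> g x \<le> g' x"
  shows "AE x in M. green M E g x \<le> green M E g' x"
proof -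
  have "AE x in M. \<forall>m n. resolvent M E (1 / real (Suc m)) (approx M g n) x
      \<le> resolvent M E (1 / real (Suc m)) (approx M g' n) x"
    unfolding AE_all_countable by (intro allI resolvent_mono approx_L2 approx_mono le) simp_all
  then show ?thesis
    unfolding green_eq_SUP by eventually_elim (intro SUP_mono' ennreal_leI, blast)
qed

end

section \<open>From a weight to a finite Green function\<close>

definition lux_dominated_weight ::
  "'a measure \<Rightarrow> (('a \<Rightarrow> real) \<Rightarrow> ennreal) \<Rightarrow> ('a \<Rightarrow> real) set \<Rightarrow> ('a \<Rightarrow> real) \<Rightarrow> bool" where
  "lux_dominated_weight M F D w \<longleftrightarrow> w \<in> borel_measurable M \<and> (\<forall>x\<in>space M. 0 < w x) \<and>
     (\<forall>f\<in>D. (\<integral>\<^sup>+x. ennreal (\<bar>f x\<bar> * w x) \<partial>M) \<le> lux_norm F f)"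

lemma nn_integral_mult_le_abs:
  "(\<And>x. x \<in> space M \<Longrightarrow> 0 \<le> w x) \<Longrightarrow>
    (\<integral>\<^sup>+x. ennreal (u x) * ennreal (w x) \<partial>M) \<le> (\<integral>\<^sup>+x. ennreal (\<bar>u x\<bar> * w x) \<partial>M)"
proof (intro nn_integral_mono)
  fix x assume "\<And>x. x \<in> space M \<Longrightarrow> 0 \<le> w x" "x \<in> space M"
  then show "ennreal (u x) * ennreal (w x) \<le> ennreal (\<bar>u x\<bar> * w x)"
    by (cases "0 \<le> u x") (auto simp: ennreal_mult[symmetric] ennreal_neg)
qed

lemma nn_integral_SUP_mult_le:
  fixes f :: "nat \<Rightarrow> 'a \<Rightarrow> ennreal" and w :: "'a \<Rightarrow> ennreal"
  assumes [measurable]: "\<And>i. f i \<in> borel_measurable M" "w \<in> borel_measurable M"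
    and mono: "\<And>i. AE x in M. f i x \<le> f (Suc i) x"
    and le: "\<And>i. (\<integral>\<^sup>+x. f i x * w x \<partial>M) \<le> c"
  shows "(\<integral>\<^sup>+x. (SUP i. f i x) * w x \<partial>M) \<le> c"
proof -
  have "(\<integral>\<^sup>+x. (SUP i. f i x) * w x \<partial>M) = (\<integral>\<^sup>+x. (SUP i. f i x * w x) \<partial>M)"
    by (simp add: SUP_mult_right_ennreal)
  also have "\<dots> = (SUP i. \<integral>\<^sup>+x. f i x * w x \<partial>M)"
  proof (rule nn_integral_monotone_convergence_SUP_AE)
    show "AE x in M. f i x * w x \<le> f (Suc i) x * w x" for i
      using mono[of i] by eventually_elim (rule mult_right_mono, simp_all)
  qed measurable
  also have "\<dots> \<le> c"
    using le by (rule SUP_least)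
  finally show ?thesis .
qed

context order_preserving_form
begin

lemma nn_integral_weight_le_if_E_le:
  assumes w: "lux_dominated_weight M E (modular_space E (L2 M)) w"
    and u: "u \<in> L2 M" "E u \<le> ennreal c" and c: "1 \<le> c"
  shows "(\<integral>\<^sup>+x. ennreal (\<bar>u x\<bar> * w x) \<partial>M) \<le> ennreal c"
proof -
  have "E u < \<infinity>"
    using u(2) by (simp add: le_less_trans)
  then have "(\<integral>\<^sup>+x. ennreal (\<bar>u x\<bar> * w x) \<partial>M) \<le> lux_norm E u"
    using w modular_space_if_E_finite[OF u(1)] by (simp add: lux_dominated_weight_def)
  also have "\<dots> \<le> ennreal c"
    using u c by (rule lux_norm_le)
  finally show ?thesis .
qed

lemma E_resolvent_le_half_weighted_integral:
  assumes \<alpha>: "0 < \<alpha>" and h: "h \<in> L2 M" "\<And>x. x \<in> space M \<Longrightarrow> 0 \<le> h x \<and> h x \<le> w x / 2"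
    and int: "integrable M (\<lambda>x. \<bar>resolvent M E \<alpha> h x\<bar> * w x)"
  shows "enn2real (E (resolvent M E \<alpha> h)) \<le> (\<integral>x. \<bar>resolvent M E \<alpha> h x\<bar> * w x \<partial>M) / 2"
proof -
  let ?u = "resolvent M E \<alpha> h"
  have "enn2real (E ?u) \<le> enn2real (E ?u) + \<alpha>/2 * (\<integral>x. (?u x)\<^sup>2 \<partial>M)"
    using \<alpha> by simp
  also have "\<dots> \<le> (\<integral>x. ?u x * h x \<partial>M)"
    by (rule resolvent_energy_bound[OF \<alpha> h(1)])
  also have "\<dots> \<le> (\<integral>x. \<bar>?u x\<bar> * w x / 2 \<partial>M)"
  proof (rule integral_mono_AE)
    show "AE x in M. ?u x * h x \<le> \<bar>?u x\<bar> * w x / 2"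
    proof (rule AE_I2)
      fix x assume "x \<in> space M"
      then have hx: "0 \<le> h x" "h x \<le> w x / 2"
        using h(2) by auto
      have "?u x * h x \<le> \<bar>?u x\<bar> * h x"
        using hx(1) by (intro mult_right_mono) auto
      also have "\<dots> \<le> \<bar>?u x\<bar> * (w x / 2)"
        using hx(2) by (intro mult_left_mono) auto
      finally show "?u x * h x \<le> \<bar>?u x\<bar> * w x / 2"
        by simp
    qed
  qed (use h int \<alpha> in \<open>auto intro: L2_integrable_mult resolvent_L2\<close>)
  finally show ?thesis
    by simp
qed

text \<open>For \<open>\<Lambda> = \<integral> \<bar>G\<^sub>\<alpha> h\<bar> w\<close> the previous lemma gives \<open>E (G\<^sub>\<alpha> h) \<le> \<Lambda> / 2\<close>, while
  \<open>\<Lambda> \<le> max 1 (E (G\<^sub>\<alpha> h))\<close>; together \<open>\<Lambda> \<le> 1\<close>.\<close>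

lemma nn_integral_resolvent_weight_le_1:
  assumes w: "lux_dominated_weight M E (modular_space E (L2 M)) w"
    and \<alpha>: "0 < \<alpha>" and h: "h \<in> L2 M" "\<And>x. x \<in> space M \<Longrightarrow> 0 \<le> h x \<and> h x \<le> w x / 2"
  shows "(\<integral>\<^sup>+x. ennreal (resolvent M E \<alpha> h x) * ennreal (w x) \<partial>M) \<le> 1"
proof -
  have [measurable]: "w \<in> borel_measurable M" and w_pos: "\<And>x. x \<in> space M \<Longrightarrow> 0 < w x"
    using w by (auto simp: lux_dominated_weight_def)
  define u where "u = resolvent M E \<alpha> h"
  have u: "u \<in> L2 M" and E_u: "E u < \<infinity>"
    unfolding u_def using resolvent_L2[OF \<alpha> h(1)] E_resolvent_finite[OF \<alpha> h(1)] by simp_all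
  have [measurable]: "u \<in> borel_measurable M"
    using u by (rule L2_measurable)
  define l where "l = max 1 (enn2real (E u))"
  have "E u = ennreal (enn2real (E u))"
    using E_u by simp
  also have "\<dots> \<le> ennreal l"
    by (intro ennreal_leI) (simp add: l_def)
  finally have \<Lambda>_le: "(\<integral>\<^sup>+x. ennreal (\<bar>u x\<bar> * w x) \<partial>M) \<le> ennreal l"
    using u by (intro nn_integral_weight_le_if_E_le[OF w]) (simp_all add: l_def)
  have int: "integrable M (\<lambda>x. \<bar>u x\<bar> * w x)"
  proof (rule integrableI_nonneg)
    show "AE x in M. 0 \<le> \<bar>u x\<bar> * w x"
      using w_pos by (auto intro!: AE_I2 mult_nonneg_nonneg simp: less_imp_le)
    show "(\<integral>\<^sup>+x. ennreal (\<bar>u x\<bar> * w x) \<partial>M) < \<infinity>"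
      by (rule le_less_trans[OF \<Lambda>_le]) simp
  qed measurable
  define \<Lambda> where "\<Lambda> = (\<integral>x. \<bar>u x\<bar> * w x \<partial>M)"
  have \<Lambda>_eq: "(\<integral>\<^sup>+x. ennreal (\<bar>u x\<bar> * w x) \<partial>M) = ennreal \<Lambda>"
    unfolding \<Lambda>_def using int w_pos
    by (intro nn_integral_eq_integral) (auto intro!: AE_I2 mult_nonneg_nonneg simp: less_imp_le)
  have "0 \<le> \<Lambda>"
    unfolding \<Lambda>_def using w_pos by (intro integral_nonneg_AE) (auto intro!: AE_I2 mult_nonneg_nonneg simp: less_imp_le)
  have "enn2real (E u) \<le> \<Lambda> / 2"
    using E_resolvent_le_half_weighted_integral[OF \<alpha> h] int by (simp add: u_def \<Lambda>_def)
  moreover have "\<Lambda> \<le> l"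
    using \<Lambda>_le \<open>0 \<le> \<Lambda>\<close> by (simp add: \<Lambda>_eq l_def)
  ultimately have "\<Lambda> \<le> 1"
    using \<open>0 \<le> \<Lambda>\<close> by (auto simp: l_def)
  have "(\<integral>\<^sup>+x. ennreal (u x) * ennreal (w x) \<partial>M) \<le> (\<integral>\<^sup>+x. ennreal (\<bar>u x\<bar> * w x) \<partial>M)"
    by (rule nn_integral_mult_le_abs) (use w_pos in \<open>auto simp: less_imp_le\<close>)
  also have "\<dots> \<le> 1"
    using \<open>\<Lambda> \<le> 1\<close> by (simp add: \<Lambda>_eq)
  finally show ?thesis
    by (simp add: u_def)
qed

end

context sigma_finite_order_preserving_form
begin

lemma nn_integral_green_weight_le_1:
  assumes w: "lux_dominated_weight M E (modular_space E (L2 M)) w"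
  shows "(\<integral>\<^sup>+x. green M E (\<lambda>x. ennreal (w x / 2)) x * ennreal (w x) \<partial>M) \<le> 1"
proof -
  have [measurable]: "w \<in> borel_measurable M" and w_pos: "\<And>x. x \<in> space M \<Longrightarrow> 0 < w x"
    using w by (auto simp: lux_dominated_weight_def)
  define G where "G x = ennreal (w x / 2)" for x
  have [measurable]: "G \<in> borel_measurable M"
    unfolding G_def by measurable
  define u where "u m n = resolvent M E (1 / real (Suc m)) (approx M G n)" for m n
  have [measurable]: "u m n \<in> borel_measurable M" for m n
    unfolding u_def by measurable
  have approx_G: "0 \<le> approx M G n x \<and> approx M G n x \<le> w x / 2" if "x \<in> space M" for n x
    unfolding G_def using approx_le[of "\<lambda>x. w x / 2" x n] approx_nonneg w_pos[OF that] by simp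
  have "(\<integral>\<^sup>+x. ennreal (u m n x) * ennreal (w x) \<partial>M) \<le> 1" for m n
    unfolding u_def using approx_G by (intro nn_integral_resolvent_weight_le_1[OF w] approx_L2) simp_all
  moreover have "AE x in M. ennreal (u m n x) \<le> ennreal (u m (Suc n) x)" for m n
    unfolding u_def by (rule eventually_mono[OF resolvent_mono ennreal_leI]) (simp_all add: approx_L2 approx_mono_index)
  ultimately have R_le: "(\<integral>\<^sup>+x. (SUP n. ennreal (u m n x)) * ennreal (w x) \<partial>M) \<le> 1" for m
    by (intro nn_integral_SUP_mult_le) simp_all
  have "AE x in M. u m n x \<le> u (Suc m) n x" for m n
    unfolding u_def by (intro resolvent_antimono_param approx_L2 approx_nonneg) (simp_all add: frac_le)
  then have "AE x in M. \<forall>n. u m n x \<le> u (Suc m) n x" for m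
    by (simp add: AE_all_countable)
  then have R_mono: "AE x in M. (SUP n. ennreal (u m n x)) \<le> (SUP n. ennreal (u (Suc m) n x))" for m
    by (rule eventually_mono) (intro SUP_mono' ennreal_leI, blast)
  have "(\<integral>\<^sup>+x. (SUP m. SUP n. ennreal (u m n x)) * ennreal (w x) \<partial>M) \<le> 1"
    by (rule nn_integral_SUP_mult_le[where f = "\<lambda>m x. SUP n. ennreal (u m n x)", OF _ _ R_mono R_le])
      measurable
  then show ?thesis
    by (simp add: green_eq_SUP u_def G_def[abs_def])
qed

lemma green_finite_AE_if_lux_dominated_weight:
  assumes w: "lux_dominated_weight M E (modular_space E (L2 M)) w"
  shows "AE x in M. green M E (\<lambda>x. ennreal (w x / 2)) x < \<infinity>"
proof -
  have [measurable]: "w \<in> borel_measurable M" and w_pos: "\<And>x. x \<in> space M \<Longrightarrow> 0 < w x"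
    using w by (auto simp: lux_dominated_weight_def)
  have "AE x in M. green M E (\<lambda>x. ennreal (w x / 2)) x * ennreal (w x) \<noteq> \<infinity>"
    using nn_integral_green_weight_le_1[OF w]
    by (intro nn_integral_PInf_AE) (auto simp: top_unique)
  then show ?thesis
  proof (rule AE_mp, intro AE_I2 impI)
    fix x assume x: "x \<in> space M"
      and "green M E (\<lambda>x. ennreal (w x / 2)) x * ennreal (w x) \<noteq> \<infinity>"
    moreover have "ennreal (w x) \<noteq> 0"
      using w_pos[OF x] by simp
    ultimately show "green M E (\<lambda>x. ennreal (w x / 2)) x < \<infinity>"
      by (auto simp: ennreal_mult_eq_top_iff less_top)
  qed
qed

end

section \<open>From a finite Green function to a weight\<close>

lemma mult_le_min_mult_add_sq_div:
  fixes p q K :: real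
  assumes "0 \<le> p" "0 \<le> q" "0 < K"
  shows "p * q \<le> min p (K * q) * q + p\<^sup>2 / K"
proof (cases "p \<le> K * q")
  case False
  then have "q \<le> p / K"
    using assms by (simp add: field_simps)
  then have "p * q \<le> p\<^sup>2 / K"
    using mult_left_mono[of q "p / K" p] assms by (simp add: power2_eq_square)
  moreover have "0 \<le> min p (K * q) * q"
    using assms by simp
  ultimately show ?thesis
    by linarith
qed (use assms in simp)

lemma min_mult_le_mult_sq:
  fixes p q K :: real
  assumes "0 \<le> q"
  shows "min p (K * q) * q \<le> K * q\<^sup>2"
  using mult_right_mono[OF min.cobounded2 assms, of p "K * q"] by (simp add: power2_eq_square)

lemma integral_mult_le_truncated:
  assumes f: "f \<in> L2 M" "\<And>x. 0 \<le> f x" and g: "g \<in> L2 M" "\<And>x. 0 \<le> g x" and K: "0 < K"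
  shows "integrable M (\<lambda>x. min (f x) (K * g x) * g x)"
    and "(\<integral>x. f x * g x \<partial>M) \<le> (\<integral>x. min (f x) (K * g x) * g x \<partial>M) + (\<integral>x. (f x)\<^sup>2 \<partial>M) / K"
proof -
  have [measurable]: "f \<in> borel_measurable M" "g \<in> borel_measurable M"
    using f g by (auto intro: L2_measurable)
  show int: "integrable M (\<lambda>x. min (f x) (K * g x) * g x)"
    by (rule Bochner_Integration.integrable_bound[where f = "\<lambda>x. K * (g x)\<^sup>2"])
      (use f g K in \<open>auto intro!: AE_I2 integrable_mult_right L2_integrable_sq min_mult_le_mult_sq\<close>)
  have "(\<integral>x. f x * g x \<partial>M) \<le> (\<integral>x. min (f x) (K * g x) * g x + (f x)\<^sup>2 / K \<partial>M)"
    using f g K by (intro integral_mono mult_le_min_mult_add_sq_div Bochner_Integration.integrable_add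
        L2_integrable_mult int integrable_divide L2_integrable_sq)
  also have "\<dots> = (\<integral>x. min (f x) (K * g x) * g x \<partial>M) + (\<integral>x. (f x)\<^sup>2 \<partial>M) / K"
    using f int by (simp add: L2_integrable_sq)
  finally show "(\<integral>x. f x * g x \<partial>M) \<le> (\<integral>x. min (f x) (K * g x) * g x \<partial>M) + (\<integral>x. (f x)\<^sup>2 \<partial>M) / K" .
qed

text \<open>Truncating \<open>\<psi>\<^sub>n\<close> at \<open>K \<phi>\<close>: the truncated part tends to \<open>0\<close> by dominated convergence and
  the remainder is at most \<open>\<parallel>\<psi>\<^sub>n\<parallel>\<^sup>2 / K \<le> B / K\<close>.\<close>

lemma integral_mult_tendsto_0_if_L2_bounded:
  fixes \<psi> :: "nat \<Rightarrow> 'a \<Rightarrow> real"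
  assumes \<psi>: "\<And>n. \<psi> n \<in> L2 M" "\<And>n x. 0 \<le> \<psi> n x" "\<And>n. (\<integral>x. (\<psi> n x)\<^sup>2 \<partial>M) \<le> B"
    and lim: "AE x in M. (\<lambda>n. \<psi> n x) \<longlonglongrightarrow> 0"
    and \<phi>: "\<phi> \<in> L2 M" "\<And>x. 0 \<le> \<phi> x"
  shows "(\<lambda>n. \<integral>x. \<psi> n x * \<phi> x \<partial>M) \<longlonglongrightarrow> 0"
proof (rule LIMSEQ_I)
  fix r :: real assume "0 < r"
  have [measurable]: "\<phi> \<in> borel_measurable M" "\<psi> n \<in> borel_measurable M" for n
    using \<phi> \<psi> by (auto intro: L2_measurable)
  define K where "K = 2 * (\<bar>B\<bar> + 1) / r"
  have "0 < K"
    using \<open>0 < r\<close> by (simp add: K_def add_pos_nonneg)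
  have "(\<lambda>n. \<integral>x. min (\<psi> n x) (K * \<phi> x) * \<phi> x \<partial>M) \<longlonglongrightarrow> (\<integral>x. 0 \<partial>M)"
  proof (rule integral_dominated_convergence[where w = "\<lambda>x. K * (\<phi> x)\<^sup>2"])
    show "AE x in M. (\<lambda>n. min (\<psi> n x) (K * \<phi> x) * \<phi> x) \<longlonglongrightarrow> 0"
      using lim
    proof eventually_elim
      case (elim x)
      have "(\<lambda>n. min (\<psi> n x) (K * \<phi> x) * \<phi> x) \<longlonglongrightarrow> min 0 (K * \<phi> x) * \<phi> x"
        by (intro tendsto_intros elim)
      then show ?case
        using \<open>0 < K\<close> \<phi>(2)[of x] by (simp add: min_def)
    qed
  qed (use \<psi>(2) \<phi> \<open>0 < K\<close> in \<open>auto intro!: AE_I2 min_mult_le_mult_sq integrable_mult_right L2_integrable_sq\<close>)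
  then have "(\<lambda>n. \<integral>x. min (\<psi> n x) (K * \<phi> x) * \<phi> x \<partial>M) \<longlonglongrightarrow> 0"
    by simp
  from LIMSEQ_D[OF this, of "r / 2"] \<open>0 < r\<close>
  obtain N where N: "\<And>n. N \<le> n \<Longrightarrow> norm ((\<integral>x. min (\<psi> n x) (K * \<phi> x) * \<phi> x \<partial>M) - 0) < r / 2"
    by auto
  have "\<bar>\<integral>x. \<psi> n x * \<phi> x \<partial>M\<bar> < r" if "N \<le> n" for n
  proof -
    have "(\<integral>x. (\<psi> n x)\<^sup>2 \<partial>M) \<le> K * (r / 2)"
      using \<psi>(3)[of n] \<open>0 < r\<close> by (simp add: K_def)
    then have "(\<integral>x. (\<psi> n x)\<^sup>2 \<partial>M) / K \<le> r / 2"
      using \<open>0 < K\<close> by (simp add: divide_le_eq mult.commute)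
    moreover have "(\<integral>x. min (\<psi> n x) (K * \<phi> x) * \<phi> x \<partial>M) < r / 2"
      using N[OF that] by (simp add: abs_less_iff)
    ultimately have "(\<integral>x. \<psi> n x * \<phi> x \<partial>M) < r"
      using integral_mult_le_truncated(2)[OF \<psi>(1,2)[of n] \<phi> \<open>0 < K\<close>] by linarith
    then show ?thesis
      using \<psi>(2) \<phi>(2) by (simp add: integral_nonneg_AE)
  qed
  then show "\<exists>N. \<forall>n\<ge>N. norm ((\<integral>x. \<psi> n x * \<phi> x \<partial>M) - 0) < r"
    by auto
qed

context order_preserving_form
begin

lemma resolvent_pairing_bound:
  assumes \<alpha>: "0 < \<alpha>" and f: "f \<in> L2 M" and \<phi>: "\<phi> \<in> L2 M" "\<And>x. 0 \<le> \<phi> x" "E \<phi> < \<infinity>"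
  defines "u \<equiv> resolvent M E \<alpha> f"
  shows "(\<integral>x. f x * \<phi> x \<partial>M)
    \<le> enn2real (E \<phi>) + (\<integral>x. f x * u x \<partial>M) + (\<integral>x. \<alpha> * max (u x) 0 * \<phi> x \<partial>M)"
proof -
  have u: "u \<in> L2 M"
    unfolding u_def using \<alpha> f by (rule resolvent_L2)
  have int: "integrable M (\<lambda>x. f x * \<phi> x)" "integrable M (\<lambda>x. \<alpha> * u x * \<phi> x)"
    "integrable M (\<lambda>x. f x * u x)" "integrable M (\<lambda>x. \<alpha> * max (u x) 0 * \<phi> x)"
    using f u \<phi>(1) by (auto simp: mult.assoc intro!: L2_integrable_mult integrable_mult_right L2_max L2_zero)
  have "(\<integral>x. f x * \<phi> x - \<alpha> * u x * \<phi> x - f x * u x \<partial>M)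
      \<le> (\<integral>x. (f x - \<alpha> * u x) * (\<phi> x - u x) \<partial>M)"
  proof (rule integral_mono)
    show "f x * \<phi> x - \<alpha> * u x * \<phi> x - f x * u x \<le> (f x - \<alpha> * u x) * (\<phi> x - u x)" for x
      using \<alpha> by (simp add: algebra_simps)
  qed (use int f u \<phi> in \<open>auto intro!: L2_integrable_mult L2_diff L2_scale\<close>)
  also have "\<dots> \<le> enn2real (E \<phi>)"
    using resolvent_variational_ineq[OF \<alpha> f \<phi>(1,3)] enn2real_nonneg[of "E u"]
    unfolding u_def by linarith
  finally have "(\<integral>x. f x * \<phi> x \<partial>M) \<le> enn2real (E \<phi>) + (\<integral>x. f x * u x \<partial>M) + (\<integral>x. \<alpha> * u x * \<phi> x \<partial>M)"
    using int by simp
  moreover have "(\<integral>x. \<alpha> * u x * \<phi> x \<partial>M) \<le> (\<integral>x. \<alpha> * max (u x) 0 * \<phi> x \<partial>M)"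
    using int \<alpha> \<phi>(2) by (intro integral_mono mult_right_mono mult_left_mono) auto
  ultimately show ?thesis
    by linarith
qed

end

context sigma_finite_order_preserving_form
begin

lemma integral_approx_mult_resolvent_le:
  assumes \<alpha>: "0 < \<alpha>" and h: "h \<in> borel_measurable M" "\<And>x. x \<in> space M \<Longrightarrow> 0 \<le> h x"
    and k: "integrable M k"
    and B: "\<And>x. x \<in> space M \<Longrightarrow> 0 \<le> B x" "\<And>x. x \<in> space M \<Longrightarrow> h x * B x \<le> k x"
    and u_le: "AE x in M. resolvent M E \<alpha> (approx M (\<lambda>x. ennreal (h x)) n) x \<le> B x"
  shows "(\<integral>x. approx M (\<lambda>x. ennreal (h x)) n x * resolvent M E \<alpha> (approx M (\<lambda>x. ennreal (h x)) n) x \<partial>M)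
    \<le> (\<integral>x. k x \<partial>M)"
proof (rule integral_mono_AE[OF L2_integrable_mult k])
  let ?hn = "approx M (\<lambda>x. ennreal (h x)) n"
  show hn: "?hn \<in> L2 M"
    using h(1) by (simp add: approx_L2)
  show "resolvent M E \<alpha> ?hn \<in> L2 M"
    using \<alpha> hn by (rule resolvent_L2)
  show "AE x in M. ?hn x * resolvent M E \<alpha> ?hn x \<le> k x"
    using u_le AE_space
  proof eventually_elim
    case (elim x)
    have "?hn x * resolvent M E \<alpha> ?hn x \<le> h x * B x"
    proof (cases "0 \<le> resolvent M E \<alpha> ?hn x")
      case True
      then show ?thesis
        using elim h(2) approx_le[of h x n] approx_nonneg by (intro mult_mono) auto
    next
      case False
      then show ?thesis
        using elim h(2) B(1) approx_nonneg[of _ n x]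
        by (metis mult_nonneg_nonneg mult_nonneg_nonpos nle_le order_trans)
    qed
    also have "\<dots> \<le> k x"
      using B(2) elim by simp
    finally show ?case .
  qed
qed

text \<open>With \<open>\<alpha>\<^sub>n = 1/(n+1)\<close> and \<open>u\<^sub>n\<close> the resolvent of the \<open>n\<close>-th truncation \<open>h\<^sub>n\<close> of \<open>h\<close>, the
  functions \<open>\<alpha>\<^sub>n u\<^sub>n\<^sup>+\<close> vanish a.e. in the limit, as the \<open>u\<^sub>n\<close> are bounded above, and
  \<open>\<parallel>\<alpha>\<^sub>n u\<^sub>n\<parallel>\<^sub>2 \<le> 2 \<parallel>h\<^sub>n\<parallel>\<^sub>2 \<le> 2 \<parallel>h\<parallel>\<^sub>2\<close>; so \<open>integral_mult_tendsto_0_if_L2_bounded\<close>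
  applies.\<close>

lemma integral_resolvent_pos_part_tendsto_0:
  assumes h: "h \<in> L2 M" "\<And>x. x \<in> space M \<Longrightarrow> 0 \<le> h x"
    and bdd: "AE x in M. \<exists>b. \<forall>n. resolvent M E (1 / real (Suc n)) (approx M (\<lambda>x. ennreal (h x)) n) x \<le> b"
    and \<phi>: "\<phi> \<in> L2 M" "\<And>x. 0 \<le> \<phi> x"
  shows "(\<lambda>n. \<integral>x. 1 / real (Suc n) * max (resolvent M E (1 / real (Suc n)) (approx M (\<lambda>x. ennreal (h x)) n) x) 0
      * \<phi> x \<partial>M) \<longlonglongrightarrow> 0"
proof -
  define \<alpha> where "\<alpha> n = 1 / real (Suc n)" for n
  define hn where "hn n = approx M (\<lambda>x. ennreal (h x)) n" for n
  define u where "u n = resolvent M E (\<alpha> n) (hn n)" for n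
  have \<alpha>: "0 < \<alpha> n" for n
    by (simp add: \<alpha>_def)
  have hn: "hn n \<in> L2 M" "0 \<le> hn n x" for n x
    unfolding hn_def using L2_measurable[OF h(1)] by (simp_all add: approx_L2 approx_nonneg)
  have u: "u n \<in> L2 M" for n
    unfolding u_def using \<alpha> hn(1) by (rule resolvent_L2)
  have "(\<lambda>n. \<integral>x. \<alpha> n * max (u n x) 0 * \<phi> x \<partial>M) \<longlonglongrightarrow> 0"
  proof (rule integral_mult_tendsto_0_if_L2_bounded[OF _ _ _ _ \<phi>])
    show \<psi>: "(\<lambda>x. \<alpha> n * max (u n x) 0) \<in> L2 M" for n
      using u by (intro L2_scale L2_max L2_zero)
    show "0 \<le> \<alpha> n * max (u n x) 0" for n x
      using \<alpha>[of n] by simp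
    show "(\<integral>x. (\<alpha> n * max (u n x) 0)\<^sup>2 \<partial>M) \<le> 4 * (\<integral>x. (h x)\<^sup>2 \<partial>M)" for n
    proof -
      have "(\<integral>x. (\<alpha> n * max (u n x) 0)\<^sup>2 \<partial>M) \<le> (\<integral>x. (\<alpha> n * u n x)\<^sup>2 \<partial>M)"
      proof (rule integral_mono)
        show "(\<alpha> n * max (u n x) 0)\<^sup>2 \<le> (\<alpha> n * u n x)\<^sup>2" for x
          using \<alpha>[of n] by (auto simp: max_def power_mult_distrib)
      qed (fact L2_integrable_sq[OF \<psi>] L2_integrable_sq[OF L2_scale[OF u]])+
      also have "\<dots> \<le> 4 * (\<integral>x. (hn n x)\<^sup>2 \<partial>M)"
        unfolding u_def by (rule resolvent_L2_bound[OF \<alpha> hn(1)])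
      also have "\<dots> \<le> 4 * (\<integral>x. (h x)\<^sup>2 \<partial>M)"
        using hn h unfolding hn_def
        by (auto intro!: integral_mono_AE AE_I2 power_mono L2_integrable_sq approx_le)
      finally show ?thesis .
    qed
    show "AE x in M. (\<lambda>n. \<alpha> n * max (u n x) 0) \<longlonglongrightarrow> 0"
      using bdd
    proof eventually_elim
      case (elim x)
      then obtain b where "\<And>n. u n x \<le> b"
        by (auto simp: u_def hn_def \<alpha>_def)
      then have "max (u n x) 0 \<le> max b 0" for n
        by (intro max.mono) auto
      then have "0 \<le> \<alpha> n * max (u n x) 0 \<and> \<alpha> n * max (u n x) 0 \<le> \<alpha> n * max b 0" for n
        using \<alpha>[of n] by (auto intro: mult_left_mono)
      moreover have lim: "(\<lambda>n. \<alpha> n * max b 0) \<longlonglongrightarrow> 0"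
        unfolding \<alpha>_def by (intro tendsto_mult_left_zero LIMSEQ_Suc[OF lim_const_over_n])
      ultimately show ?case
        by (intro tendsto_sandwich[OF _ _ tendsto_const lim]) auto
    qed
  qed
  then show ?thesis
    by (simp add: \<alpha>_def u_def hn_def)
qed

text \<open>Pair the variational inequality for \<open>u\<^sub>n\<close> with \<open>\<phi>\<close>: the term \<open>\<integral> h\<^sub>n u\<^sub>n\<close> stays below
  \<open>\<integral> k\<close> since \<open>u\<^sub>n \<le> B\<close>, and the term \<open>\<integral> \<alpha>\<^sub>n u\<^sub>n\<^sup>+ \<phi>\<close> vanishes in the limit.\<close>

lemma integral_mult_le_if_resolvents_bounded:
  assumes h: "h \<in> L2 M" "\<And>x. x \<in> space M \<Longrightarrow> 0 \<le> h x"
    and k: "integrable M k"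
    and B: "\<And>x. x \<in> space M \<Longrightarrow> 0 \<le> B x" "\<And>x. x \<in> space M \<Longrightarrow> h x * B x \<le> k x"
    and u_le: "AE x in M. \<forall>n. resolvent M E (1 / real (Suc n)) (approx M (\<lambda>x. ennreal (h x)) n) x \<le> B x"
    and \<phi>: "\<phi> \<in> L2 M" "\<And>x. 0 \<le> \<phi> x" "E \<phi> \<le> 1"
  shows "(\<integral>x. h x * \<phi> x \<partial>M) \<le> 1 + (\<integral>x. k x \<partial>M)"
proof -
  have [measurable]: "h \<in> borel_measurable M" "\<phi> \<in> borel_measurable M"
    using h(1) \<phi>(1) by (auto intro: L2_measurable)
  define \<alpha> where "\<alpha> n = 1 / real (Suc n)" for n
  define hn where "hn n = approx M (\<lambda>x. ennreal (h x)) n" for n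
  define u where "u n = resolvent M E (\<alpha> n) (hn n)" for n
  have \<alpha>: "0 < \<alpha> n" for n
    by (simp add: \<alpha>_def)
  have hn: "hn n \<in> L2 M" "0 \<le> hn n x" for n x
    unfolding hn_def by (simp_all add: approx_L2 approx_nonneg)
  have [measurable]: "hn n \<in> borel_measurable M" for n
    unfolding hn_def by measurable
  have E_\<phi>: "E \<phi> < \<infinity>" "enn2real (E \<phi>) \<le> 1"
    using \<phi>(3) by (simp_all add: le_less_trans enn2real_leI)
  have step: "(\<integral>x. hn n x * \<phi> x \<partial>M)
      \<le> 1 + (\<integral>x. k x \<partial>M) + (\<integral>x. \<alpha> n * max (u n x) 0 * \<phi> x \<partial>M)" for n
  proof -
    have "AE x in M. u n x \<le> B x"
      using u_le by eventually_elim (simp add: u_def hn_def \<alpha>_def)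
    then have "(\<integral>x. hn n x * u n x \<partial>M) \<le> (\<integral>x. k x \<partial>M)"
      unfolding hn_def u_def using integral_approx_mult_resolvent_le[OF \<alpha> _ h(2) k B] by simp
    then show ?thesis
      using resolvent_pairing_bound[OF \<alpha>[of n] hn(1)[of n] \<phi>(1,2) E_\<phi>(1)] E_\<phi>(2)
      unfolding u_def by linarith
  qed
  have lim_h: "(\<lambda>n. \<integral>x. hn n x * \<phi> x \<partial>M) \<longlonglongrightarrow> (\<integral>x. h x * \<phi> x \<partial>M)"
  proof (rule integral_dominated_convergence[where w = "\<lambda>x. h x * \<phi> x"])
    show "AE x in M. (\<lambda>n. hn n x * \<phi> x) \<longlonglongrightarrow> h x * \<phi> x"
      unfolding hn_def using h(2) by (auto intro!: AE_I2 tendsto_mult approx_tendsto)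
    show "AE x in M. norm (hn n x * \<phi> x) \<le> h x * \<phi> x" for n
      using hn(2) h(2) \<phi>(2) unfolding hn_def by (auto intro!: AE_I2 mult_right_mono approx_le)
    show "(\<lambda>x. hn n x * \<phi> x) \<in> borel_measurable M" for n
      by measurable
  qed (use h(1) \<phi>(1) in \<open>auto intro: L2_integrable_mult\<close>)
  have "AE x in M. \<exists>b. \<forall>n. resolvent M E (1 / real (Suc n)) (approx M (\<lambda>x. ennreal (h x)) n) x \<le> b"
    using u_le by eventually_elim blast
  then have lim_\<psi>: "(\<lambda>n. \<integral>x. \<alpha> n * max (u n x) 0 * \<phi> x \<partial>M) \<longlonglongrightarrow> 0"
    using integral_resolvent_pos_part_tendsto_0[OF h _ \<phi>(1,2)] by (simp add: \<alpha>_def u_def hn_def)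
  have "(\<integral>x. h x * \<phi> x \<partial>M) \<le> 1 + (\<integral>x. k x \<partial>M) + 0"
    by (rule LIMSEQ_le[OF lim_h tendsto_add[OF tendsto_const lim_\<psi>]]) (use step in auto)
  then show ?thesis
    by simp
qed

end

lemma truncated_weight_bounds:
  fixes g k b :: real
  assumes "0 < g" "0 < k" "0 \<le> b"
  defines "h \<equiv> min 1 (min g k) / (1 + b)"
  shows "0 < h" "h \<le> g" "h * b \<le> k" "h\<^sup>2 \<le> k"
proof -
  define m where "m = min 1 (min g k)"
  have m: "0 < m" "m \<le> 1" "m \<le> g" "m \<le> k"
    using assms by (auto simp: m_def)
  have h: "h = m / (1 + b)"
    by (simp add: h_def m_def)
  show "0 < h"
    unfolding h using m assms by simp
  have "h \<le> m"
    unfolding h using m assms by (simp add: divide_le_eq)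
  then show "h \<le> g"
    using m by simp
  have "h * b = m * (b / (1 + b))"
    unfolding h by simp
  also have "\<dots> \<le> m"
    using m assms by (intro mult_left_le) auto
  finally show "h * b \<le> k"
    using m by simp
  have "h\<^sup>2 \<le> h"
    using \<open>0 < h\<close> \<open>h \<le> m\<close> m by (simp add: power2_eq_square mult_left_le)
  then show "h\<^sup>2 \<le> k"
    using \<open>h \<le> m\<close> m by simp
qed

lemma (in sigma_finite_measure) ex_positive_integrable:
  "\<exists>k :: 'a \<Rightarrow> real. integrable M k \<and> (\<forall>x\<in>space M. 0 < k x)"
proof -
  obtain k where [measurable]: "k \<in> borel_measurable M" and "integral\<^sup>N M k \<noteq> \<infinity>"
    and k: "\<And>x. x \<in> space M \<Longrightarrow> 0 < k x \<and> k x < \<infinity>"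
    using Ex_finite_integrable_function by blast
  have "integrable M (\<lambda>x. enn2real (k x))"
  proof (rule integrableI_nonneg)
    have "(\<integral>\<^sup>+x. ennreal (enn2real (k x)) \<partial>M) = integral\<^sup>N M k"
      using k by (intro nn_integral_cong) (simp add: less_top)
    then show "(\<integral>\<^sup>+x. ennreal (enn2real (k x)) \<partial>M) < \<infinity>"
      using \<open>integral\<^sup>N M k \<noteq> \<infinity>\<close> by (simp add: less_top)
  qed simp_all
  moreover have "\<forall>x\<in>space M. 0 < enn2real (k x)"
    using k by (simp add: enn2real_positive_iff less_top)
  ultimately show ?thesis
    by blast
qed

context order_preserving_form
begin

lemma lux_dominated_weight_if_unit_ball_bound:
  assumes w: "w \<in> L2 M" "\<And>x. x \<in> space M \<Longrightarrow> 0 < w x"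
    and bound: "\<And>\<phi>. \<phi> \<in> L2 M \<Longrightarrow> (\<And>x. 0 \<le> \<phi> x) \<Longrightarrow> E \<phi> \<le> 1 \<Longrightarrow> (\<integral>x. w x * \<phi> x \<partial>M) \<le> 1"
  shows "lux_dominated_weight M E (modular_space E (L2 M)) w"
  unfolding lux_dominated_weight_def
proof (intro conjI ballI)
  fix f assume "f \<in> modular_space E (L2 M)"
  then have f: "f \<in> L2 M"
    by (simp add: modular_space_def)
  show "(\<integral>\<^sup>+x. ennreal (\<bar>f x\<bar> * w x) \<partial>M) \<le> lux_norm E f"
    unfolding lux_norm_def
  proof (rule Inf_greatest, clarify)
    fix l :: real assume l: "0 < l" "E (\<lambda>x. f x / l) \<le> 1"
    define \<phi> where "\<phi> x = \<bar>f x / l\<bar>" for x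
    have "\<phi> \<in> L2 M"
      unfolding \<phi>_def using f by (intro L2_abs L2_div)
    moreover have "E \<phi> \<le> 1"
      unfolding \<phi>_def using E_abs_le[OF L2_div[OF f]] l(2) by (rule order_trans)
    ultimately have \<phi>: "\<phi> \<in> L2 M" "E \<phi> \<le> 1" .
    have \<phi>_nonneg: "0 \<le> \<phi> x" for x
      by (simp add: \<phi>_def)
    have "(\<integral>\<^sup>+x. ennreal (\<bar>f x\<bar> * w x) \<partial>M) = (\<integral>\<^sup>+x. ennreal (l * (w x * \<phi> x)) \<partial>M)"
      using l(1) by (intro nn_integral_cong) (simp add: \<phi>_def abs_divide ac_simps)
    also have "\<dots> = ennreal (l * (\<integral>x. w x * \<phi> x \<partial>M))"
      using w \<phi>(1) l(1)
      by (subst nn_integral_eq_integral) (auto intro!: AE_I2 L2_integrable_mult simp: \<phi>_nonneg less_imp_le)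
    also have "\<dots> \<le> ennreal l"
      using bound[OF \<phi>(1) \<phi>_nonneg \<phi>(2)] l(1) by (intro ennreal_leI) simp
    finally show "(\<integral>\<^sup>+x. ennreal (\<bar>f x\<bar> * w x) \<partial>M) \<le> ennreal l" .
  qed
qed (use w in \<open>auto intro: L2_measurable\<close>)

end

context sigma_finite_order_preserving_form
begin

lemma resolvent_approx_le_green_AE:
  assumes [measurable]: "h \<in> borel_measurable M" "g \<in> borel_measurable M"
    and le: "\<And>x. x \<in> space M \<Longrightarrow> h x \<le> g x"
    and green_finite: "AE x in M. green M E (\<lambda>x. ennreal (g x)) x < \<infinity>"
  shows "AE x in M. \<forall>n. resolvent M E (1 / real (Suc n)) (approx M (\<lambda>x. ennreal (h x)) n) x
    \<le> enn2real (green M E (\<lambda>x. ennreal (g x)) x)"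
proof -
  have "AE x in M. green M E (\<lambda>x. ennreal (h x)) x \<le> green M E (\<lambda>x. ennreal (g x)) x"
    using le by (intro green_mono) (simp_all add: ennreal_leI)
  then show ?thesis
    using green_finite
  proof eventually_elim
    case (elim x)
    have "ennreal (resolvent M E (1 / real (Suc n)) (approx M (\<lambda>x. ennreal (h x)) n) x)
        \<le> green M E (\<lambda>x. ennreal (h x)) x" for n
      by (rule resolvent_approx_le_green)
    also have "\<dots> \<le> green M E (\<lambda>x. ennreal (g x)) x"
      using elim(1) .
    also have "\<dots> = ennreal (enn2real (green M E (\<lambda>x. ennreal (g x)) x))"
      using elim(2) by (simp add: less_top)
    finally show ?case
      by (simp add: ennreal_le_iff)
  qed
qed

text \<open>The weight is \<open>h / (1 + \<integral> k)\<close> with \<open>h = min 1 (min g k) / (1 + G g)\<close> for an integrable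
  \<open>k > 0\<close>: then \<open>h \<le> g\<close> bounds the resolvents of the truncations of \<open>h\<close> by \<open>G g\<close>, and
  \<open>h \<cdot> G g \<le> k\<close>.\<close>

lemma lux_dominated_weight_if_green_finite_AE:
  assumes g: "g \<in> borel_measurable M" "\<And>x. x \<in> space M \<Longrightarrow> 0 < g x"
    and green_finite: "AE x in M. green M E (\<lambda>x. ennreal (g x)) x < \<infinity>"
  shows "\<exists>w. lux_dominated_weight M E (modular_space E (L2 M)) w"
proof -
  have [measurable]: "g \<in> borel_measurable M"
    by (fact g)
  obtain k :: "'a \<Rightarrow> real" where k: "integrable M k" "\<And>x. x \<in> space M \<Longrightarrow> 0 < k x"
    using ex_positive_integrable by blast
  have [measurable]: "k \<in> borel_measurable M"
    using k(1) by (rule borel_measurable_integrable)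
  define B where "B x = enn2real (green M E (\<lambda>x. ennreal (g x)) x)" for x
  define h where "h x = min 1 (min (g x) (k x)) / (1 + B x)" for x
  have [measurable]: "h \<in> borel_measurable M"
    unfolding h_def B_def by measurable
  have h: "0 < h x" "h x \<le> g x" "h x * B x \<le> k x" "(h x)\<^sup>2 \<le> k x" if "x \<in> space M" for x
    unfolding h_def using truncated_weight_bounds[OF g(2) k(2), OF that that, of "B x"] by (simp_all add: B_def)
  have h_L2: "h \<in> L2 M"
    using k h(4) by (intro L2_I_bound[OF _ k(1)]) auto
  have resolvent_le: "AE x in M. \<forall>n.
      resolvent M E (1 / real (Suc n)) (approx M (\<lambda>x. ennreal (h x)) n) x \<le> B x"
    unfolding B_def using h(2) green_finite by (intro resolvent_approx_le_green_AE) simp_all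
  define C where "C = 1 + (\<integral>x. k x \<partial>M)"
  have "0 < C"
    using k by (simp add: C_def add_pos_nonneg integral_nonneg_AE less_imp_le)
  have "lux_dominated_weight M E (modular_space E (L2 M)) (\<lambda>x. h x / C)"
  proof (rule lux_dominated_weight_if_unit_ball_bound)
    fix \<phi> assume \<phi>: "\<phi> \<in> L2 M" "\<And>x. 0 \<le> \<phi> x" "E \<phi> \<le> 1"
    have "(\<integral>x. h x * \<phi> x \<partial>M) \<le> C"
      unfolding C_def using h_L2 h k resolvent_le \<phi>
      by (intro integral_mult_le_if_resolvents_bounded) (auto simp: B_def less_imp_le)
    then show "(\<integral>x. h x / C * \<phi> x \<partial>M) \<le> 1"
      using \<open>0 < C\<close> by simp
  qed (use h_L2 h \<open>0 < C\<close> in \<open>auto intro: L2_div\<close>)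
  then show ?thesis
    by blast
qed

end

section \<open>The relaxed form\<close>

text \<open>Pick \<open>r k\<close> with \<open>Q (r k)\<close> such that the points of the \<open>k\<close>-th exhausting set where
  \<open>fs (r k)\<close> is \<open>2\<^sup>-\<^sup>k\<close>-far from \<open>F\<close> have measure below \<open>2\<^sup>-\<^sup>k\<close>, and apply Borel--Cantelli.\<close>

lemma (in sigma_finite_measure) loc_conv_meas_AE_subseq:
  assumes [measurable]: "\<And>n. fs n \<in> borel_measurable M" "F \<in> borel_measurable M"
    and conv: "loc_conv_meas M fs F" and freq: "\<And>N. \<exists>n\<ge>N. Q n"
  shows "\<exists>r. (\<forall>k. Q (r k)) \<and> (AE x in M. (\<lambda>k. fs (r k) x) \<longlonglongrightarrow> F x)"
proof -
  have [measurable]: "exhaustion M k \<in> sets M" for k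
    by (rule exhaustion_sets)
  define D where "D k n = {x \<in> space M. x \<in> exhaustion M k \<and> (1/2::real)^k < \<bar>fs n x - F x\<bar>}" for k n
  have [measurable]: "D k n \<in> sets M" for k n
    unfolding D_def by measurable
  have D_lim: "(\<lambda>n. emeasure M (D k n)) \<longlonglongrightarrow> 0" for k
  proof -
    have D_eq: "{x \<in> exhaustion M k. (1/2::real)^k < \<bar>fs n x - F x\<bar>} = D k n" for n
      unfolding D_def using sets.sets_into_space[OF exhaustion_sets[of k]] by auto
    show ?thesis
      unfolding D_eq[symmetric] using conv exhaustion_sets[of k] exhaustion_finite[of k]
      unfolding loc_conv_meas_def by auto
  qed
  have "\<exists>n. Q n \<and> emeasure M (D k n) < ennreal ((1/2)^k)" for k
  proof -
    have "\<forall>\<^sub>F n in sequentially. emeasure M (D k n) < ennreal ((1/2)^k)"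
      using D_lim[of k] by (rule order_tendstoD(2)) simp
    then obtain N where N: "\<And>n. N \<le> n \<Longrightarrow> emeasure M (D k n) < ennreal ((1/2)^k)"
      by (auto simp: eventually_sequentially)
    obtain n where "N \<le> n" "Q n"
      using freq by blast
    with N show ?thesis
      by blast
  qed
  then obtain r where r: "\<And>k. Q (r k)" "\<And>k. emeasure M (D k (r k)) < ennreal ((1/2)^k)"
    by metis
  have "measure M (D k (r k)) \<le> (1/2)^k" for k
    using r(2)[of k] by (simp add: measure_def enn2real_leI less_imp_le)
  then have "summable (\<lambda>k. measure M (D k (r k)))"
    by (intro summable_comparison_test'[OF summable_geometric[of "1/2"]]) auto
  then have "AE x in M. \<forall>\<^sub>F k in sequentially. x \<in> space M - D k (r k)"
    using less_trans[OF r(2) ennreal_less_top] by (intro borel_cantelli_AE1) auto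
  then have "AE x in M. (\<lambda>k. fs (r k) x) \<longlonglongrightarrow> F x"
    using AE_space
  proof eventually_elim
    case (elim x)
    obtain i where "x \<in> exhaustion M i"
      using exhaustion_UN elim(2) by blast
    then have "\<forall>\<^sub>F k in sequentially. x \<in> exhaustion M k"
      using incseq_exhaustion by (auto simp: eventually_sequentially incseq_def)
    with elim(1) have "\<forall>\<^sub>F k in sequentially. norm (fs (r k) x - F x) \<le> (1/2)^k"
      by eventually_elim (auto simp: D_def)
    then have "(\<lambda>k. fs (r k) x - F x) \<longlonglongrightarrow> 0"
      by (rule Lim_null_comparison) (simp add: LIMSEQ_power_zero)
    then show ?case
      by (rule LIM_zero_cancel)
  qed
  with r(1) show ?thesis
    by blast
qed

context sigma_finite_order_preserving_form
begin

text \<open>\<open>E\<^sub>e F < c\<close> provides functions converging to \<open>F\<close> locally in measure whose energies are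
  frequently below \<open>c\<close>; Fatou's lemma along an a.e. convergent subsequence transfers the bound
  \<open>\<integral> \<bar>f\<bar> w \<le> \<parallel>f\<parallel>\<^sub>L \<le> c\<close> to \<open>F\<close>.\<close>

lemma nn_integral_weight_le_if_E_e_less:
  assumes w: "lux_dominated_weight M E (modular_space E (L2 M)) w"
    and F: "F \<in> borel_measurable M" and c: "1 \<le> c" "E_e M E F < ennreal c"
  shows "(\<integral>\<^sup>+x. ennreal (\<bar>F x\<bar> * w x) \<partial>M) \<le> ennreal c"
proof -
  have [measurable]: "w \<in> borel_measurable M" "F \<in> borel_measurable M"
    using w F by (simp_all add: lux_dominated_weight_def)
  obtain fs where fs: "\<And>n. fs n \<in> borel_measurable M" "loc_conv_meas M fs F"
    and liminf_less: "liminf (\<lambda>n. E_ext M E (fs n)) < ennreal c"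
    using c(2) unfolding E_e_def INF_less_iff by blast
  have freq: "\<exists>n\<ge>N. E_ext M E (fs n) < ennreal c" for N
  proof (rule ccontr)
    assume "\<not> (\<exists>n\<ge>N. E_ext M E (fs n) < ennreal c)"
    then have "ennreal c \<le> liminf (\<lambda>n. E_ext M E (fs n))"
      by (intro Liminf_bounded) (auto simp: eventually_sequentially not_less)
    with liminf_less show False
      by simp
  qed
  then obtain r where r: "\<And>k. E_ext M E (fs (r k)) < ennreal c"
    and r_lim: "AE x in M. (\<lambda>k. fs (r k) x) \<longlonglongrightarrow> F x"
    using loc_conv_meas_AE_subseq[OF fs(1) F fs(2) freq] by blast
  have [measurable]: "fs (r k) \<in> borel_measurable M" for k
    by (rule fs(1))
  have bound: "(\<integral>\<^sup>+x. ennreal (\<bar>fs (r k) x\<bar> * w x) \<partial>M) \<le> ennreal c" for k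
    using r[of k] c(1) by (intro nn_integral_weight_le_if_E_le[OF w])
      (auto simp: E_ext_def split: if_splits)
  have "AE x in M. (\<lambda>k. \<bar>fs (r k) x\<bar> * w x) \<longlonglongrightarrow> \<bar>F x\<bar> * w x"
    using r_lim by eventually_elim (intro tendsto_mult_right tendsto_rabs)
  then have "(\<integral>\<^sup>+x. ennreal (\<bar>F x\<bar> * w x) \<partial>M)
      \<le> liminf (\<lambda>k. \<integral>\<^sup>+x. ennreal (\<bar>fs (r k) x\<bar> * w x) \<partial>M)"
    by (rule nn_integral_le_liminf_AE_tendsto[rotated]) measurable
  also have "\<dots> \<le> ennreal c"
    using bound by (intro Liminf_le) auto
  finally show ?thesis .
qed

lemma lux_dominated_weight_E_e:
  assumes w: "lux_dominated_weight M E (modular_space E (L2 M)) w"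
  shows "lux_dominated_weight M (E_e M E) (modular_space (E_e M E) (borel_measurable M)) w"
  unfolding lux_dominated_weight_def
proof (intro conjI ballI)
  have [measurable]: "w \<in> borel_measurable M" and w_pos: "\<And>x. x \<in> space M \<Longrightarrow> 0 < w x"
    using w by (auto simp: lux_dominated_weight_def)
  fix f assume "f \<in> modular_space (E_e M E) (borel_measurable M)"
  then have [measurable]: "f \<in> borel_measurable M"
    by (simp add: modular_space_def)
  show "(\<integral>\<^sup>+x. ennreal (\<bar>f x\<bar> * w x) \<partial>M) \<le> lux_norm (E_e M E) f"
    unfolding lux_norm_def
  proof (rule Inf_greatest, clarify)
    fix l :: real assume l: "0 < l" "E_e M E (\<lambda>x. f x / l) \<le> 1"
    have unit: "(\<integral>\<^sup>+x. ennreal (\<bar>f x / l\<bar> * w x) \<partial>M) \<le> 1"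
    proof (rule ennreal_le_epsilon)
      fix e :: real assume "0 < e"
      then have "E_e M E (\<lambda>x. f x / l) < ennreal (1 + e)"
        by (intro le_less_trans[OF l(2)]) simp
      with \<open>0 < e\<close> show "(\<integral>\<^sup>+x. ennreal (\<bar>f x / l\<bar> * w x) \<partial>M) \<le> 1 + ennreal e"
        using nn_integral_weight_le_if_E_e_less[OF w, of "\<lambda>x. f x / l" "1 + e"] by (simp add: ennreal_plus)
    qed
    have "(\<integral>\<^sup>+x. ennreal (\<bar>f x\<bar> * w x) \<partial>M) = (\<integral>\<^sup>+x. ennreal l * ennreal (\<bar>f x / l\<bar> * w x) \<partial>M)"
      using l(1) w_pos by (intro nn_integral_cong) (simp add: abs_divide ennreal_mult[symmetric] less_imp_le)
    also have "\<dots> = ennreal l * (\<integral>\<^sup>+x. ennreal (\<bar>f x / l\<bar> * w x) \<partial>M)"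
      by (rule nn_integral_cmult) measurable
    also have "\<dots> \<le> ennreal l"
      using mult_left_mono[OF unit, of "ennreal l"] by simp
    finally show "(\<integral>\<^sup>+x. ennreal (\<bar>f x\<bar> * w x) \<partial>M) \<le> ennreal l" .
  qed
qed (use w in \<open>simp_all add: lux_dominated_weight_def\<close>)

end

theorem theorem4p6:
  fixes M :: "'a measure" and E :: "('a \<Rightarrow> real) \<Rightarrow> ennreal"
  assumes "sigma_finite_measure M"
    and "nonlinear_order_preserving_form M E"
  shows "((\<exists>g. g \<in> borel_measurable M \<and> (\<forall>x\<in>space M. 0 < g x) \<and>
              (AE x in M. green M E (\<lambda>x. ennreal (g x)) x < \<infinity>))
          \<longleftrightarrow>
          (\<exists>w. w \<in> borel_measurable M \<and> (\<forall>x\<in>space M. 0 < w x) \<and>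
              (\<forall>f\<in>modular_space E (L2 M). (\<integral>\<^sup>+x. ennreal (\<bar>f x\<bar> * w x) \<partial>M) \<le> lux_norm E f)))
      \<and> (Ee_exists M E \<longrightarrow>
          (\<forall>w. w \<in> borel_measurable M \<and> (\<forall>x\<in>space M. 0 < w x) \<and>
              (\<forall>f\<in>modular_space E (L2 M). (\<integral>\<^sup>+x. ennreal (\<bar>f x\<bar> * w x) \<partial>M) \<le> lux_norm E f)
            \<longrightarrow> (\<forall>f\<in>modular_space (E_e M E) (borel_measurable M).
                  (\<integral>\<^sup>+x. ennreal (\<bar>f x\<bar> * w x) \<partial>M) \<le> lux_norm (E_e M E) f)))"
proof -
  interpret sigma_finite_order_preserving_form M E
    using assms by (simp add: sigma_finite_order_preserving_form_def order_preserving_form_def)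
  have "(\<exists>g. g \<in> borel_measurable M \<and> (\<forall>x\<in>space M. 0 < g x) \<and>
          (AE x in M. green M E (\<lambda>x. ennreal (g x)) x < \<infinity>))
      \<longleftrightarrow> (\<exists>w. lux_dominated_weight M E (modular_space E (L2 M)) w)"
  proof
    assume "\<exists>g. g \<in> borel_measurable M \<and> (\<forall>x\<in>space M. 0 < g x) \<and>
      (AE x in M. green M E (\<lambda>x. ennreal (g x)) x < \<infinity>)"
    then show "\<exists>w. lux_dominated_weight M E (modular_space E (L2 M)) w"
      using lux_dominated_weight_if_green_finite_AE by blast
  next
    assume "\<exists>w. lux_dominated_weight M E (modular_space E (L2 M)) w"
    then obtain w where w: "lux_dominated_weight M E (modular_space E (L2 M)) w" ..
    then show "\<exists>g. g \<in> borel_measurable M \<and> (\<forall>x\<in>space M. 0 < g x) \<and>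
      (AE x in M. green M E (\<lambda>x. ennreal (g x)) x < \<infinity>)"
      using green_finite_AE_if_lux_dominated_weight[OF w]
      by (intro exI[of _ "\<lambda>x. w x / 2"]) (auto simp: lux_dominated_weight_def)
  qed
  moreover note lux_dominated_weight_E_e
  ultimately show ?thesis
    unfolding lux_dominated_weight_def by blast
qed

end
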